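(* Over $\mathrm{IKP}$, the following are equivalent: (i) $\mathrm{PlUb}$ holds and the plump operator $(-)^{\mathrm{pl}} : \mathrm{Ord} \to \mathrm{PlOrd}$ is injective; (ii) restricted excluded middle, i.e. $\forall x\ \forall y\,(x \in y \lor \neg x \in y)$.
   Context: $\mathrm{IKP}$ is intuitionistic Kripke–Platek set theory (with strong infinity). An ordinal is a transitive set of transitive sets; $\mathrm{Ord}$ is the class of ordinals. For sets $\alpha,\gamma$, $\mathrm{relpl}_\alpha(\gamma)$ denotes $\forall \delta \in \gamma\ \forall \varepsilon \in \alpha\,(\varepsilon \subseteq \delta \rightarrow \varepsilon \in \gamma)$. $\mathrm{PlOrd}$ is the class of ordinals $\alpha$ such that for all $\beta \in \alpha$ and all $\gamma \subseteq \beta$ with $\mathrm{relpl}_\alpha(\gamma)$, we have $\gamma \in \alpha$ and $\forall \delta \in \alpha\,(\beta \in \delta \rightarrow \gamma \in \delta)$. For $\alpha \in \mathrm{PlOrd}$, the plump successor is $\alpha^{\mathrm{pl}+} = \mathcal{P}(\alpha) \cap \mathrm{PlOrd} = \{\beta \subseteq \alpha : \mathrm{relpl}_\alpha(\beta)\}$. $\mathrm{PlUb}$ is the axiom $\forall \alpha \in \mathrm{PlOrd}\ \exists \beta \in \mathrm{PlOrd}\ \alpha \in \beta$; under $\mathrm{PlUb}$ every plump successor exists as a set. Assuming $\mathrm{PlUb}$, the plump operator is defined by recursion on $\alpha \in \mathrm{Ord}$ as $\alpha^{\mathrm{pl}} = \bigcup_{\beta \in \alpha} (\beta^{\mathrm{pl}})^{\mathrm{pl}+}$,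 and it takes values in $\mathrm{PlOrd}$. *)

theory Defs
  imports Main
begin

section \<open>Deep embedding of first-order intuitionistic logic in the language {\<in>, =}\<close>

text \<open>Formulas with de Bruijn indices. Terms are variables only.\<close>

datatype fm =
    Mem nat nat | Eq nat nat | Fls
  | Conj fm fm | Disj fm fm | Imp fm fm
  | All fm | Ex fm

definition Iff :: "fm \<Rightarrow> fm \<Rightarrow> fm" where
  "Iff A B = Conj (Imp A B) (Imp B A)"

definition up :: "(nat \<Rightarrow> nat) \<Rightarrow> nat \<Rightarrow> nat" where
  "up \<sigma> n = (case n of 0 \<Rightarrow> 0 | Suc m \<Rightarrow> Suc (\<sigma> m))"

fun ren :: "(nat \<Rightarrow> nat) \<Rightarrow> fm \<Rightarrow> fm" where
  "ren \<sigma> (Mem i j) = Mem (\<sigma> i) (\<sigma> j)"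
| "ren \<sigma> (Eq i j) = Eq (\<sigma> i) (\<sigma> j)"
| "ren \<sigma> Fls = Fls"
| "ren \<sigma> (Conj A B) = Conj (ren \<sigma> A) (ren \<sigma> B)"
| "ren \<sigma> (Disj A B) = Disj (ren \<sigma> A) (ren \<sigma> B)"
| "ren \<sigma> (Imp A B) = Imp (ren \<sigma> A) (ren \<sigma> B)"
| "ren \<sigma> (All A) = All (ren (up \<sigma>) A)"
| "ren \<sigma> (Ex A) = Ex (ren (up \<sigma>) A)"

definition lift :: "fm \<Rightarrow> fm" where
  "lift A = ren Suc A"

definition inst :: "fm \<Rightarrow> nat \<Rightarrow> fm" where
  "inst A x = ren (\<lambda>n. case n of 0 \<Rightarrow> x | Suc m \<Rightarrow> m) A"

fun fvs :: "fm \<Rightarrow> nat set" where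
  "fvs (Mem i j) = {i, j}"
| "fvs (Eq i j) = {i, j}"
| "fvs Fls = {}"
| "fvs (Conj A B) = fvs A \<union> fvs B"
| "fvs (Disj A B) = fvs A \<union> fvs B"
| "fvs (Imp A B) = fvs A \<union> fvs B"
| "fvs (All A) = {n. Suc n \<in> fvs A}"
| "fvs (Ex A) = {n. Suc n \<in> fvs A}"

definition closed :: "fm \<Rightarrow> bool" where
  "closed A \<longleftrightarrow> fvs A = {}"

fun alls :: "nat \<Rightarrow> fm \<Rightarrow> fm" where
  "alls 0 A = A"
| "alls (Suc n) A = All (alls n A)"

inductive deriv :: "fm set \<Rightarrow> fm \<Rightarrow> bool" (infix "\<turnstile>" 55) where
  Hyp: "A \<in> \<Gamma> \<Longrightarrow> \<Gamma> \<turnstile> A"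
| FlsE: "\<Gamma> \<turnstile> Fls \<Longrightarrow> \<Gamma> \<turnstile> A"
| ConjI: "\<Gamma> \<turnstile> A \<Longrightarrow> \<Gamma> \<turnstile> B \<Longrightarrow> \<Gamma> \<turnstile> Conj A B"
| ConjE1: "\<Gamma> \<turnstile> Conj A B \<Longrightarrow> \<Gamma> \<turnstile> A"
| ConjE2: "\<Gamma> \<turnstile> Conj A B \<Longrightarrow> \<Gamma> \<turnstile> B"
| DisjI1: "\<Gamma> \<turnstile> A \<Longrightarrow> \<Gamma> \<turnstile> Disj A B"
| DisjI2: "\<Gamma> \<turnstile> B \<Longrightarrow> \<Gamma> \<turnstile> Disj A B"
| DisjE: "\<Gamma> \<turnstile> Disj A B \<Longrightarrow> insert A \<Gamma> \<turnstile> C \<Longrightarrow> insert B \<Gamma> \<turnstile> C \<Longrightarrow> \<Gamma> \<turnstile> C"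
| ImpI: "insert A \<Gamma> \<turnstile> B \<Longrightarrow> \<Gamma> \<turnstile> Imp A B"
| ImpE: "\<Gamma> \<turnstile> Imp A B \<Longrightarrow> \<Gamma> \<turnstile> A \<Longrightarrow> \<Gamma> \<turnstile> B"
| AllI: "lift ` \<Gamma> \<turnstile> A \<Longrightarrow> \<Gamma> \<turnstile> All A"
| AllE: "\<Gamma> \<turnstile> All A \<Longrightarrow> \<Gamma> \<turnstile> inst A x"
| ExI: "\<Gamma> \<turnstile> inst A x \<Longrightarrow> \<Gamma> \<turnstile> Ex A"
| ExE: "\<Gamma> \<turnstile> Ex A \<Longrightarrow> insert A (lift ` \<Gamma>) \<turnstile> lift C \<Longrightarrow> \<Gamma> \<turnstile> C"
| EqRefl: "\<Gamma> \<turnstile> Eq x x"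
| EqSubst: "\<Gamma> \<turnstile> Eq x y \<Longrightarrow> \<Gamma> \<turnstile> inst A x \<Longrightarrow> \<Gamma> \<turnstile> inst A y"

section \<open>Named-variable surface syntax, compiled to de Bruijn form\<close>

datatype nfm =
    NMem nat nat | NEq nat nat | NFls
  | NConj nfm nfm | NDisj nfm nfm | NImp nfm nfm
  | NAll nat nfm | NEx nat nfm

fun idx :: "nat list \<Rightarrow> nat \<Rightarrow> nat" where
  "idx [] x = x"
| "idx (y # ys) x = (if x = y then 0 else Suc (idx ys x))"

fun tr :: "nat list \<Rightarrow> nfm \<Rightarrow> fm" where
  "tr bs (NMem x y) = Mem (idx bs x) (idx bs y)"
| "tr bs (NEq x y) = Eq (idx bs x) (idx bs y)"
| "tr bs NFls = Fls"
| "tr bs (NConj A B) = Conj (tr bs A) (tr bs B)"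
| "tr bs (NDisj A B) = Disj (tr bs A) (tr bs B)"
| "tr bs (NImp A B) = Imp (tr bs A) (tr bs B)"
| "tr bs (NAll x A) = All (tr (x # bs) A)"
| "tr bs (NEx x A) = Ex (tr (x # bs) A)"

definition dB :: "nfm \<Rightarrow> fm" where
  "dB A = tr [] A"

definition nIff :: "nfm \<Rightarrow> nfm \<Rightarrow> nfm" where
  "nIff A B = NConj (NImp A B) (NImp B A)"
definition nNeg :: "nfm \<Rightarrow> nfm" where
  "nNeg A = NImp A NFls"
definition nBAll :: "nat \<Rightarrow> nat \<Rightarrow> nfm \<Rightarrow> nfm" where
  "nBAll x a A = NAll x (NImp (NMem x a) A)"
definition nBEx :: "nat \<Rightarrow> nat \<Rightarrow> nfm \<Rightarrow> nfm" where
  "nBEx x a A = NEx x (NConj (NMem x a) A)"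

text \<open>Convention: in the helpers below, the first argument k is a fresh name base;
  bound names k, k+1, ... are used internally; the parameters must all be < k.\<close>

definition nSub :: "nat \<Rightarrow> nat \<Rightarrow> nat \<Rightarrow> nfm" where
  "nSub k a b = nBAll k a (NMem k b)"

definition nTrans :: "nat \<Rightarrow> nat \<Rightarrow> nfm" where
  "nTrans k x = nBAll k x (nBAll (k+1) k (NMem (k+1) x))"

definition nOrd :: "nat \<Rightarrow> nat \<Rightarrow> nfm" where
  "nOrd k x = NConj (nTrans k x) (nBAll k x (nTrans (k+1) k))"

text \<open>relpl_a(g): \<forall>\<delta>\<in>g \<forall>\<epsilon>\<in>a (\<epsilon> \<subseteq> \<delta> \<longrightarrow> \<epsilon> \<in> g)\<close>
definition nRelpl :: "nat \<Rightarrow> nat \<Rightarrow> nat \<Rightarrow> nfm" where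
  "nRelpl k a g = nBAll k g (nBAll (k+1) a (NImp (nSub (k+2) (k+1) k) (NMem (k+1) g)))"

text \<open>a \<in> PlOrd (beta = k, gamma = k+1, delta = k+2)\<close>
definition nPlOrd :: "nat \<Rightarrow> nat \<Rightarrow> nfm" where
  "nPlOrd k a = NConj (nOrd k a)
     (nBAll k a (NAll (k+1)
        (NImp (NConj (nSub (k+2) (k+1) k) (nRelpl (k+2) a (k+1)))
              (NConj (NMem (k+1) a)
                     (nBAll (k+2) a (NImp (NMem k (k+2)) (NMem (k+1) (k+2))))))))"

definition nPlUb :: "nat \<Rightarrow> nfm" where
  "nPlUb k = NAll k (NImp (nPlOrd (k+1) k)
                (NEx (k+1) (NConj (nPlOrd (k+2) (k+1)) (NMem k (k+1)))))"

text \<open>Kuratowski pairs: z = {a}, z = {a,b}, p = (a,b), (a,b) \<in> F\<close>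
definition nSing :: "nat \<Rightarrow> nat \<Rightarrow> nat \<Rightarrow> nfm" where
  "nSing k z a = NAll k (nIff (NMem k z) (NEq k a))"
definition nDoub :: "nat \<Rightarrow> nat \<Rightarrow> nat \<Rightarrow> nat \<Rightarrow> nfm" where
  "nDoub k z a b = NAll k (nIff (NMem k z) (NDisj (NEq k a) (NEq k b)))"
definition nPair :: "nat \<Rightarrow> nat \<Rightarrow> nat \<Rightarrow> nat \<Rightarrow> nfm" where
  "nPair k p a b = NAll k (nIff (NMem k p) (NDisj (nSing (k+1) k a) (nDoub (k+1) k a b)))"
definition nInPair :: "nat \<Rightarrow> nat \<Rightarrow> nat \<Rightarrow> nat \<Rightarrow> nfm" where
  "nInPair k a b F = nBEx k F (nPair (k+1) k a b)"

text \<open>y = a^pl, expressed (Sigma-recursion style) by the existence of an approximation: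
  a function F (set of pairs) on a transitive domain D with a \<in> D such that
  F(beta) = \<Union>_{gamma\<in>beta} (F(gamma))^{pl+} for all beta \<in> D, and F(a) = y.
  Here x \<in> w^{pl+} iff x \<subseteq> w \<and> relpl_w(x).
  Names: F = k, D = k+1.\<close>
definition nPL :: "nat \<Rightarrow> nat \<Rightarrow> nat \<Rightarrow> nfm" where
  "nPL k a y = NEx k (NEx (k+1)
     (NConj (nTrans (k+2) (k+1))
     (NConj (NMem a (k+1))
     (NConj (nBAll (k+2) (k+1) (NEx (k+3) (nInPair (k+4) (k+2) (k+3) k)))
     (NConj (nBAll (k+2) k (nBEx (k+3) (k+1) (NEx (k+4) (nPair (k+5) (k+2) (k+3) (k+4)))))
     (NConj (nBAll (k+2) k (nBAll (k+3) k (NAll (k+4) (NAll (k+5) (NAll (k+6)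
               (NImp (NConj (nPair (k+7) (k+2) (k+4) (k+5)) (nPair (k+7) (k+3) (k+4) (k+6)))
                     (NEq (k+5) (k+6))))))))
     (NConj (nBAll (k+2) k (NAll (k+3) (NAll (k+4)
               (NImp (nPair (k+5) (k+2) (k+3) (k+4))
                  (NAll (k+5) (nIff (NMem (k+5) (k+4))
                     (nBEx (k+6) (k+3) (NEx (k+7)
                        (NConj (nInPair (k+8) (k+6) (k+7) k)
                          (NConj (nSub (k+8) (k+5) (k+7)) (nRelpl (k+8) (k+7) (k+5))))))))))))
            (nInPair (k+2) a y k))))))))"

definition nInj :: "nat \<Rightarrow> nfm" where
  "nInj k = NAll k (NAll (k+1) (NAll (k+2)
     (NImp (NConj (nOrd (k+3) k) (NConj (nOrd (k+3) (k+1))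
              (NConj (nPL (k+3) k (k+2)) (nPL (k+3) (k+1) (k+2)))))
           (NEq k (k+1)))))"

definition nREM :: nfm where
  "nREM = NAll 0 (NAll 1 (NDisj (NMem 0 1) (nNeg (NMem 0 1))))"

section \<open>The theory IKP (with strong infinity)\<close>

definition nExt :: nfm where
  "nExt = NAll 0 (NAll 1 (NImp (NAll 2 (nIff (NMem 2 0) (NMem 2 1))) (NEq 0 1)))"
definition nPairing :: nfm where
  "nPairing = NAll 0 (NAll 1 (NEx 2 (NConj (NMem 0 2) (NMem 1 2))))"
definition nUnion :: nfm where
  "nUnion = NAll 0 (NEx 1 (nBAll 2 0 (nBAll 3 2 (NMem 3 1))))"
definition nEmpty :: nfm where
  "nEmpty = NEx 0 (NAll 1 (nNeg (NMem 1 0)))"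

text \<open>a is inductive: contains an empty set and is closed under x \<mapsto> x \<union> {x}\<close>
definition nInd :: "nat \<Rightarrow> nat \<Rightarrow> nfm" where
  "nInd k a = NConj (nBEx k a (nBAll (k+1) k NFls))
     (nBAll k a (nBEx (k+1) a
        (NConj (nBAll (k+2) (k+1) (NDisj (NMem (k+2) k) (NEq (k+2) k)))
               (NConj (nSub (k+2) k (k+1)) (NMem k (k+1))))))"

definition nStrongInf :: nfm where
  "nStrongInf = NEx 0 (NConj (nInd 1 0) (NAll 1 (NImp (nInd 2 1) (nSub 2 0 1))))"

inductive delta0 :: "fm \<Rightarrow> bool" where
  "delta0 (Mem i j)"
| "delta0 (Eq i j)"
| "delta0 Fls"
| "delta0 A \<Longrightarrow> delta0 B \<Longrightarrow> delta0 (Conj A B)"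
| "delta0 A \<Longrightarrow> delta0 B \<Longrightarrow> delta0 (Disj A B)"
| "delta0 A \<Longrightarrow> delta0 B \<Longrightarrow> delta0 (Imp A B)"
| "delta0 A \<Longrightarrow> delta0 (All (Imp (Mem 0 (Suc y)) A))"
| "delta0 A \<Longrightarrow> delta0 (Ex (Conj (Mem 0 (Suc y)) A))"

definition shift1 :: "nat \<Rightarrow> nat" where
  "shift1 n = (if n = 0 then 0 else Suc n)"
definition shift2 :: "nat \<Rightarrow> nat" where
  "shift2 n = (if n < 2 then n else Suc n)"

text \<open>Separation instance for phi(x = var 0, a = var 1, params = vars \<ge> 2):
  \<forall>a \<exists>b \<forall>x (x \<in> b \<longleftrightarrow> x \<in> a \<and> phi)\<close>
definition Sep :: "fm \<Rightarrow> fm" where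
  "Sep \<phi> = All (Ex (All (Iff (Mem 0 1) (Conj (Mem 0 2) (ren shift1 \<phi>)))))"

text \<open>Collection instance for phi(y = var 0, x = var 1, a = var 2, params = vars \<ge> 3):
  \<forall>a (\<forall>x\<in>a \<exists>y phi \<longrightarrow> \<exists>b \<forall>x\<in>a \<exists>y\<in>b phi)\<close>
definition Coll :: "fm \<Rightarrow> fm" where
  "Coll \<phi> = All (Imp (All (Imp (Mem 0 1) (Ex \<phi>)))
                      (Ex (All (Imp (Mem 0 2) (Ex (Conj (Mem 0 2) (ren shift2 \<phi>)))))))"

text \<open>Set induction instance for phi(a = var 0, params = vars \<ge> 1):
  \<forall>a (\<forall>x\<in>a phi(x) \<longrightarrow> phi(a)) \<longrightarrow> \<forall>a phi(a)\<close>
definition SetInd :: "fm \<Rightarrow> fm" where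
  "SetInd \<phi> = Imp (All (Imp (All (Imp (Mem 0 1) (ren shift1 \<phi>))) \<phi>)) (All \<phi>)"

definition IKP :: "fm set" where
  "IKP = {dB nExt, dB nPairing, dB nUnion, dB nEmpty, dB nStrongInf}
     \<union> {alls n (Sep \<phi>) | n \<phi>. delta0 \<phi> \<and> closed (alls n (Sep \<phi>))}
     \<union> {alls n (Coll \<phi>) | n \<phi>. delta0 \<phi> \<and> closed (alls n (Coll \<phi>))}
     \<union> {alls n (SetInd \<phi>) | n \<phi>. closed (alls n (SetInd \<phi>))}"

end

theory Submission
  imports Defs
begin

(* (ii) => (i): under restricted excluded middle any two ordinals are comparable (double set
  induction plus extensionality), so every ordinal is plump. This gives PlUb, since the successor
  a \<union> {a} of an ordinal is an ordinal containing a, and, by set induction on a, the identity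
  a^pl = a, whence the plump operator is injective.
  (i) => (ii): given u and v, put 0 = {}, 1 = {0}, r = {z \<in> 1 | u \<in> v} and compare the ordinals
  A = {0, 1, r} and B = {0, 1}. Their elements g satisfy g^pl = g and g \<subseteq> 1, so A^pl and B^pl
  both equal the set of all subsets of 1; that this is a set comes from PlUb, which yields a plump
  ordinal containing 1 and hence every subset of 1. Injectivity gives A = B, so r = 0 or r = 1,
  that is, u \<notin> v or u \<in> v. *)

section \<open>Renaming and eigenvariables\<close>

lemma up_0[simp]: "up s 0 = 0" and up_Suc[simp]: "up s (Suc m) = Suc (s m)"
  by (simp_all add: up_def)

lemma up_comp: "up f \<circ> up g = up (f \<circ> g)"
  by (rule ext) (simp add: up_def split: nat.split)

lemma ren_comp: "ren f (ren g A) = ren (f \<circ> g) A"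
  by (induction A arbitrary: f g) (simp_all add: up_comp)

lemma ren_cong: "(\<And>i. i \<in> fvs A \<Longrightarrow> f i = g i) \<Longrightarrow> ren f A = ren g A"
proof (induction A arbitrary: f g)
  case (All A)
  have "up f i = up g i" if "i \<in> fvs A" for i using All.prems that
    by (cases i) auto
  then have "ren (up f) A = ren (up g) A" by (rule All.IH)
  then show ?case by simp
next
  case (Ex A)
  have "up f i = up g i" if "i \<in> fvs A" for i using Ex.prems that
    by (cases i) auto
  then have "ren (up f) A = ren (up g) A" by (rule Ex.IH)
  then show ?case by simp
next
  case (Conj A B) then show ?case by (metis UnCI fvs.simps(4) ren.simps(4))
next
  case (Disj A B) then show ?case by (metis UnCI fvs.simps(5) ren.simps(5))
next
  case (Imp A B) then show ?case by (metis UnCI fvs.simps(6) ren.simps(6))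
next
  case (Mem i j) then show ?case by (metis fvs.simps(1) insertCI ren.simps(1))
next
  case (Eq i j) then show ?case by (metis fvs.simps(2) insertCI ren.simps(2))
qed simp

lemma up_id: "up (\<lambda>a. a) = (\<lambda>a. a)"
  by (rule ext) (simp add: up_def split: nat.split)

lemma ren_id: "ren (\<lambda>a. a) A = A"
  by (induction A) (simp_all add: up_id)

lemma closed_ren: "fvs A = {} \<Longrightarrow> ren f A = A"
  using ren_cong[of A f "\<lambda>a. a"] ren_id by auto

lemma finite_fvs[simp]: "finite (fvs A)"
  by (induction A) (simp_all add: finite_vimageI[of _ Suc, unfolded vimage_def])

lemma inst_ren: "ren f (inst A x) = inst (ren (up f) A) (f x)"
  unfolding inst_def ren_comp
  by (rule arg_cong[where f="\<lambda>g. ren g A"]) (rule ext, simp add: up_def split: nat.split)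

lemma lift_ren: "ren (up f) (lift A) = lift (ren f A)"
  unfolding lift_def ren_comp by (rule arg_cong[where f="\<lambda>g. ren g A"]) (rule ext, simp)

lemma deriv_mono: "\<Gamma> \<turnstile> A \<Longrightarrow> \<Gamma> \<subseteq> \<Delta> \<Longrightarrow> \<Delta> \<turnstile> A"
proof (induction arbitrary: \<Delta> rule: deriv.induct)
  case (Hyp A \<Gamma>) then show ?case by (auto intro: deriv.Hyp)
next
  case (DisjE \<Gamma> A B C) then show ?case by (meson deriv.DisjE insert_mono)
next
  case (ImpI A \<Gamma> B) then show ?case by (meson deriv.ImpI insert_mono)
next
  case (AllI \<Gamma> A) then show ?case by (meson deriv.AllI image_mono)
next
  case (ExE \<Gamma> A C) then show ?case by (meson deriv.ExE image_mono insert_mono)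
next
  case (FlsE \<Gamma> A) then show ?case by (meson deriv.FlsE)
next
  case (ConjI \<Gamma> A B) then show ?case by (meson deriv.ConjI)
next
  case (ConjE1 \<Gamma> A B) then show ?case by (meson deriv.ConjE1)
next
  case (ConjE2 \<Gamma> A B) then show ?case by (meson deriv.ConjE2)
next
  case (DisjI1 \<Gamma> A B) then show ?case by (meson deriv.DisjI1)
next
  case (DisjI2 \<Gamma> A B) then show ?case by (meson deriv.DisjI2)
next
  case (ImpE \<Gamma> A B) then show ?case by (meson deriv.ImpE)
next
  case (AllE \<Gamma> A x) then show ?case by (meson deriv.AllE)
next
  case (ExI \<Gamma> A x) then show ?case by (meson deriv.ExI)
next
  case (EqRefl \<Gamma> x) then show ?case by (meson deriv.EqRefl)
next
  case (EqSubst \<Gamma> x y A) then show ?case by (meson deriv.EqSubst)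
qed

lemma deriv_ren: "\<Gamma> \<turnstile> A \<Longrightarrow> ren f ` \<Gamma> \<turnstile> ren f A"
proof (induction arbitrary: f rule: deriv.induct)
  case (Hyp A \<Gamma>) then show ?case by (auto intro: deriv.Hyp)
next
  case (FlsE \<Gamma> A f) then show ?case by (metis deriv.FlsE ren.simps(3))
next
  case (DisjE \<Gamma> A B C) then show ?case by (metis deriv.DisjE image_insert ren.simps(5))
next
  case (ImpI A \<Gamma> B) then show ?case by (metis deriv.ImpI image_insert ren.simps(6))
next
  case (AllI \<Gamma> A f)
  have "ren (up f) ` lift ` \<Gamma> = lift ` ren f ` \<Gamma>" by (auto simp: lift_ren image_image)
  with AllI.IH[of "up f"] show ?case by (auto intro: deriv.AllI)
next
  case (AllE \<Gamma> A x f)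
  then show ?case by (metis deriv.AllE inst_ren ren.simps(7))
next
  case (ExI \<Gamma> A x f)
  then show ?case by (metis deriv.ExI inst_ren ren.simps(8))
next
  case (ExE \<Gamma> A C f)
  have "ren (up f) ` insert A (lift ` \<Gamma>) = insert (ren (up f) A) (lift ` ren f ` \<Gamma>)"
    by (auto simp: lift_ren image_image)
  with ExE.IH(2)[of "up f"] ExE.IH(1)[of f] show ?case
    by (metis deriv.ExE lift_ren ren.simps(8))
next
  case (EqSubst \<Gamma> x y A f)
  then show ?case by (metis deriv.EqSubst inst_ren ren.simps(2))
next
  case (ConjI \<Gamma> A B f) then show ?case by (metis deriv.ConjI ren.simps(4))
next
  case (ConjE1 \<Gamma> A B f) then show ?case by (metis deriv.ConjE1 ren.simps(4))
next
  case (ConjE2 \<Gamma> A B f) then show ?case by (metis deriv.ConjE2 ren.simps(4))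
next
  case (DisjI1 \<Gamma> A B f) then show ?case by (metis deriv.DisjI1 ren.simps(5))
next
  case (DisjI2 \<Gamma> A B f) then show ?case by (metis deriv.DisjI2 ren.simps(5))
next
  case (ImpE \<Gamma> A B f) then show ?case by (metis deriv.ImpE ren.simps(6))
next
  case (EqRefl \<Gamma> x f) then show ?case by (metis deriv.EqRefl ren.simps(2))
qed

text \<open>Finiteness of the free
  variables is what makes a fresh eigenvariable available, so that the quantifier rules can be
  applied with named variables instead of de Bruijn lifting.\<close>

definition ctxt_fvs :: "fm set \<Rightarrow> nat set" where
  "ctxt_fvs \<Gamma> = (\<Union>A\<in>\<Gamma>. fvs A)"

definition ikp_ctxt :: "fm set \<Rightarrow> bool" where
  "ikp_ctxt \<Gamma> \<longleftrightarrow> IKP \<subseteq> \<Gamma> \<and> finite (ctxt_fvs \<Gamma>)"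

lemma ikp_ctxt_insert[simp]: "ikp_ctxt \<Gamma> \<Longrightarrow> ikp_ctxt (insert A \<Gamma>)"
  by (auto simp: ikp_ctxt_def ctxt_fvs_def)

lemma ikp_ctxt_IKP: "ikp_ctxt IKP"
proof -
  have "ctxt_fvs IKP \<subseteq> fvs (dB nExt) \<union> fvs (dB nPairing) \<union> fvs (dB nUnion) \<union> fvs (dB nEmpty)
      \<union> fvs (dB nStrongInf)"
    unfolding ctxt_fvs_def IKP_def closed_def by blast
  then have "finite (ctxt_fvs IKP)" by (rule finite_subset) simp
  then show ?thesis unfolding ikp_ctxt_def by simp
qed

lemma ex_fresh_var:
  assumes "ikp_ctxt \<Gamma>" and "finite S"
  obtains n where "n \<notin> ctxt_fvs \<Gamma>" and "n \<notin> S"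
  using ex_new_if_finite[OF infinite_UNIV_nat, of "ctxt_fvs \<Gamma> \<union> S"] assms
  unfolding ikp_ctxt_def by blast

lemma ren_fresh_lift: "n \<notin> fvs A \<Longrightarrow> ren (\<lambda>m. if m = n then 0 else Suc m) A = lift A"
  unfolding lift_def by (rule ren_cong) auto

lemma ren_fresh_lift_ctxt:
  "n \<notin> ctxt_fvs \<Gamma> \<Longrightarrow> ren (\<lambda>m. if m = n then 0 else Suc m) ` \<Gamma> = lift ` \<Gamma>"
  by (auto simp: ctxt_fvs_def ren_fresh_lift intro!: image_cong)

lemma ren_fresh_inst: "n \<notin> fvs (All A) \<Longrightarrow> ren (\<lambda>m. if m = n then 0 else Suc m) (inst A n) = A"
proof -
  assume n: "n \<notin> fvs (All A)"
  have "ren ((\<lambda>m. if m = n then 0 else Suc m) \<circ> (\<lambda>k. case k of 0 \<Rightarrow> n | Suc m \<Rightarrow> m)) A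
      = ren (\<lambda>a. a) A"
    by (rule ren_cong) (use n in \<open>auto split: nat.split\<close>)
  then show ?thesis unfolding inst_def ren_comp ren_id .
qed

lemma AllI_inst:
  assumes "ikp_ctxt \<Gamma>" and "\<And>x. \<Gamma> \<turnstile> inst A x"
  shows "\<Gamma> \<turnstile> All A"
proof -
  obtain n where n: "n \<notin> ctxt_fvs \<Gamma>" "n \<notin> fvs (All A)"
    using ex_fresh_var[OF assms(1) finite_fvs[of "All A"]] .
  let ?f = "\<lambda>m. if m = n then 0 else Suc m"
  have "ren ?f ` \<Gamma> \<turnstile> ren ?f (inst A n)" using assms(2) deriv_ren by blast
  then have "lift ` \<Gamma> \<turnstile> A" using n by (simp add: ren_fresh_lift_ctxt ren_fresh_inst)
  then show ?thesis by (rule deriv.AllI)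
qed

lemma ExE_inst:
  assumes "\<Gamma> \<turnstile> Ex A" and "ikp_ctxt \<Gamma>" and "\<And>x. insert (inst A x) \<Gamma> \<turnstile> C"
  shows "\<Gamma> \<turnstile> C"
proof -
  obtain n where n: "n \<notin> ctxt_fvs \<Gamma>" "n \<notin> fvs (All A) \<union> fvs C"
    using ex_fresh_var[OF assms(2) finite_UnI[OF finite_fvs[of "All A"] finite_fvs[of C]]] .
  let ?f = "\<lambda>m. if m = n then 0 else Suc m"
  have "ren ?f ` insert (inst A n) \<Gamma> \<turnstile> ren ?f C" using assms(3) deriv_ren by blast
  then have "insert A (lift ` \<Gamma>) \<turnstile> lift C"
    using n by (simp add: ren_fresh_lift_ctxt ren_fresh_inst ren_fresh_lift)
  with assms(1) show ?thesis by (rule deriv.ExE)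
qed

section \<open>The axioms of IKP as rules\<close>

lemma fvs_alls: "fvs (alls n B) = {i. i + n \<in> fvs B}"
  by (induction n arbitrary: B) (auto simp: add_Suc_right)

lemma alls_Suc_inner: "alls (Suc n) B = alls n (All B)"
  by (induction n) auto

lemma alls_elim: "(\<And>\<tau>. \<Gamma> \<turnstile> ren \<tau> (alls n B)) \<Longrightarrow> \<Gamma> \<turnstile> ren \<rho> B"
proof (induction n arbitrary: B \<rho>)
  case 0 then show ?case by simp
next
  case (Suc n)
  have "\<Gamma> \<turnstile> ren \<tau> (alls n (All B))" for \<tau> using Suc.prems[of \<tau>] by (metis alls_Suc_inner)
  then have "\<Gamma> \<turnstile> ren (\<lambda>m. \<rho> (Suc m)) (All B)" by (rule Suc.IH)
  then have "\<Gamma> \<turnstile> inst (ren (up (\<lambda>m. \<rho> (Suc m))) B) (\<rho> 0)" by (simp add: deriv.AllE)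
  moreover have "inst (ren (up (\<lambda>m. \<rho> (Suc m))) B) (\<rho> 0) = ren \<rho> B"
    unfolding inst_def ren_comp
    by (rule arg_cong[where f="\<lambda>g. ren g B"]) (rule ext, simp add: up_def split: nat.split)
  ultimately show ?case by simp
qed

lemma ex_alls_closed: "\<exists>n. closed (alls n A)"
proof -
  have "fvs A \<subseteq> {..<Suc (Max (insert 0 (fvs A)))}"
    by (auto simp: less_Suc_eq_le)
  then show ?thesis unfolding closed_def fvs_alls
    by (auto intro!: exI[of _ "Suc (Max (insert 0 (fvs A)))"])
qed

lemma deriv_closure_body:
  assumes "IKP \<subseteq> \<Gamma>" and "\<And>n. closed (alls n B) \<Longrightarrow> alls n B \<in> IKP"
  shows "\<Gamma> \<turnstile> B"
proof -
  obtain n where n: "closed (alls n B)" using ex_alls_closed by blast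
  have "\<Gamma> \<turnstile> ren \<tau> (alls n B)" for \<tau>
    using n assms by (auto simp: closed_def closed_ren intro: Hyp)
  then have "\<Gamma> \<turnstile> ren (\<lambda>a. a) B" by (rule alls_elim)
  then show ?thesis by (simp add: ren_id)
qed

lemma Sep_in_IKP: "delta0 \<phi> \<Longrightarrow> closed (alls n (Sep \<phi>)) \<Longrightarrow> alls n (Sep \<phi>) \<in> IKP"
  unfolding IKP_def by (intro UnI1 UnI2) blast

lemma SetInd_in_IKP: "closed (alls n (SetInd \<phi>)) \<Longrightarrow> alls n (SetInd \<phi>) \<in> IKP"
  unfolding IKP_def by (intro UnI2) blast

lemma IKP_Sep: "IKP \<subseteq> \<Gamma> \<Longrightarrow> delta0 \<phi> \<Longrightarrow> \<Gamma> \<turnstile> Sep \<phi>"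
  by (erule deriv_closure_body) (rule Sep_in_IKP)

lemma IKP_SetInd: "IKP \<subseteq> \<Gamma> \<Longrightarrow> \<Gamma> \<turnstile> SetInd \<phi>"
  by (erule deriv_closure_body) (rule SetInd_in_IKP)

lemma IKP_Ext: "IKP \<subseteq> \<Gamma> \<Longrightarrow> \<Gamma> \<turnstile> dB nExt"
  and IKP_Pairing: "IKP \<subseteq> \<Gamma> \<Longrightarrow> \<Gamma> \<turnstile> dB nPairing"
  and IKP_Union: "IKP \<subseteq> \<Gamma> \<Longrightarrow> \<Gamma> \<turnstile> dB nUnion"
  and IKP_Empty: "IKP \<subseteq> \<Gamma> \<Longrightarrow> \<Gamma> \<turnstile> dB nEmpty"
  by (auto intro!: Hyp simp: IKP_def)

definition Neg :: "fm \<Rightarrow> fm" where "Neg A = Imp A Fls"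

text \<open>Bounded quantifiers and comprehension in de Bruijn form: in \<open>BAll a A\<close>,
  \<open>BEx a A\<close> and \<open>Compr s P\<close> the bound variable is index 0 of \<open>A\<close> resp. \<open>P\<close>,
  while \<open>a\<close> and \<open>s\<close> are read outside the binder. \<open>Compr s P\<close> states
  \<open>s = {z | P z}\<close>.\<close>

abbreviation BAll :: "nat \<Rightarrow> fm \<Rightarrow> fm" where
  "BAll a A \<equiv> All (Imp (Mem 0 (Suc a)) A)"

abbreviation BEx :: "nat \<Rightarrow> fm \<Rightarrow> fm" where
  "BEx a A \<equiv> Ex (Conj (Mem 0 (Suc a)) A)"

abbreviation Compr :: "nat \<Rightarrow> fm \<Rightarrow> fm" where
  "Compr s P \<equiv> All (Iff (Mem 0 (Suc s)) P)"

lemma Hyp_insert: "insert A \<Gamma> \<turnstile> A" by (rule Hyp) simp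
lemma weaken: "\<Gamma> \<turnstile> A \<Longrightarrow> insert B \<Gamma> \<turnstile> A" by (erule deriv_mono) auto
lemma weaken2: "\<Gamma> \<turnstile> A \<Longrightarrow> insert C (insert B \<Gamma>) \<turnstile> A" by (erule deriv_mono) auto

lemma cut: "\<Gamma> \<turnstile> A \<Longrightarrow> insert A \<Gamma> \<turnstile> B \<Longrightarrow> \<Gamma> \<turnstile> B"
  by (meson ImpE ImpI)

lemma NegI: "insert A \<Gamma> \<turnstile> Fls \<Longrightarrow> \<Gamma> \<turnstile> Neg A" unfolding Neg_def by (rule ImpI)
lemma NegE: "\<Gamma> \<turnstile> Neg A \<Longrightarrow> \<Gamma> \<turnstile> A \<Longrightarrow> \<Gamma> \<turnstile> C" unfolding Neg_def by (meson ImpE FlsE)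

lemma IffI: "insert A \<Gamma> \<turnstile> B \<Longrightarrow> insert B \<Gamma> \<turnstile> A \<Longrightarrow> \<Gamma> \<turnstile> Iff A B"
  unfolding Iff_def by (intro ConjI ImpI)
lemma IffD1: "\<Gamma> \<turnstile> Iff A B \<Longrightarrow> \<Gamma> \<turnstile> A \<Longrightarrow> \<Gamma> \<turnstile> B"
  unfolding Iff_def by (meson ConjE1 ImpE)
lemma IffD2: "\<Gamma> \<turnstile> Iff A B \<Longrightarrow> \<Gamma> \<turnstile> B \<Longrightarrow> \<Gamma> \<turnstile> A"
  unfolding Iff_def by (meson ConjE2 ImpE)

lemma ConjE_insert: "insert A (insert B \<Gamma>) \<turnstile> C \<Longrightarrow> insert (Conj A B) \<Gamma> \<turnstile> C"
  apply (rule cut[OF ConjE1[OF Hyp_insert]]) apply (rule cut[OF weaken[OF ConjE2[OF Hyp_insert]]])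
  apply (erule deriv_mono) by blast

lemma ConjE_insert': "insert B (insert A \<Gamma>) \<turnstile> C \<Longrightarrow> insert (Conj A B) \<Gamma> \<turnstile> C"
  apply (rule cut[OF ConjE1[OF Hyp_insert]]) apply (rule cut[OF weaken[OF ConjE2[OF Hyp_insert]]])
  apply (erule deriv_mono) by blast

lemma ConjE_insert2: assumes h: "insert X (insert A (insert B \<Gamma>)) \<turnstile> C"
  shows "insert X (insert (Conj A B) \<Gamma>) \<turnstile> C"
proof -
  have c: "insert X (insert (Conj A B) \<Gamma>) \<turnstile> Conj A B" by (rule Hyp) simp
  show ?thesis
    by (rule cut[OF ConjE1[OF c]], rule cut[OF weaken[OF ConjE2[OF c]]], rule deriv_mono[OF h], blast)
qed

lemma inst_Imp[simp]: "inst (Imp A B) x = Imp (inst A x) (inst B x)" by (simp add: inst_def)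
lemma inst_Conj[simp]: "inst (Conj A B) x = Conj (inst A x) (inst B x)" by (simp add: inst_def)
lemma inst_Disj[simp]: "inst (Disj A B) x = Disj (inst A x) (inst B x)" by (simp add: inst_def)
lemma inst_Iff[simp]: "inst (Iff A B) x = Iff (inst A x) (inst B x)" by (simp add: inst_def Iff_def)
lemma inst_Neg[simp]: "inst (Neg A) x = Neg (inst A x)" by (simp add: inst_def Neg_def)
lemma inst_Fls[simp]: "inst Fls x = Fls" by (simp add: inst_def)
lemma inst_Mem0[simp]: "inst (Mem 0 (Suc a)) x = Mem x a" by (simp add: inst_def)
lemma inst_Mem0'[simp]: "inst (Mem (Suc a) 0) x = Mem a x" by (simp add: inst_def)

lemma BAllI: "ikp_ctxt \<Gamma> \<Longrightarrow> (\<And>z. insert (Mem z a) \<Gamma> \<turnstile> inst A z) \<Longrightarrow> \<Gamma> \<turnstile> BAll a A"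
  by (rule AllI_inst) (auto intro: ImpI)
lemma BAllE: "\<Gamma> \<turnstile> BAll a A \<Longrightarrow> \<Gamma> \<turnstile> Mem z a \<Longrightarrow> \<Gamma> \<turnstile> inst A z"
  by (drule AllE[where x=z]) (auto intro: ImpE)
lemma BExI: "\<Gamma> \<turnstile> Mem z a \<Longrightarrow> \<Gamma> \<turnstile> inst A z \<Longrightarrow> \<Gamma> \<turnstile> BEx a A"
  by (rule ExI[where x=z]) (simp add: ConjI)
lemma BExE:
  assumes "\<Gamma> \<turnstile> BEx a A" and "ikp_ctxt \<Gamma>"
    and "\<And>z. insert (Mem z a) (insert (inst A z) \<Gamma>) \<turnstile> C"
  shows "\<Gamma> \<turnstile> C"
  using assms(1,2) by (rule ExE_inst) (simp add: ConjE_insert assms(3))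

lemma Eq_sym: "\<Gamma> \<turnstile> Eq x y \<Longrightarrow> \<Gamma> \<turnstile> Eq y x"
  using EqSubst[of \<Gamma> x y "Eq 0 (Suc x)"] EqRefl by (simp add: inst_def)
lemma Eq_trans: "\<Gamma> \<turnstile> Eq x y \<Longrightarrow> \<Gamma> \<turnstile> Eq y z \<Longrightarrow> \<Gamma> \<turnstile> Eq x z"
  using EqSubst[of \<Gamma> y z "Eq (Suc x) 0"] by (simp add: inst_def)
lemma Mem_subst_left: "\<Gamma> \<turnstile> Eq x y \<Longrightarrow> \<Gamma> \<turnstile> Mem x z \<Longrightarrow> \<Gamma> \<turnstile> Mem y z"
  using EqSubst[of \<Gamma> x y "Mem 0 (Suc z)"] by (simp add: inst_def)
lemma Mem_subst_right: "\<Gamma> \<turnstile> Eq x y \<Longrightarrow> \<Gamma> \<turnstile> Mem z x \<Longrightarrow> \<Gamma> \<turnstile> Mem z y"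
  using EqSubst[of \<Gamma> x y "Mem (Suc z) 0"] by (simp add: inst_def)

lemma Mem_subst_left_sym: "\<Gamma> \<turnstile> Eq z a \<Longrightarrow> \<Gamma> \<turnstile> Mem a u \<Longrightarrow> \<Gamma> \<turnstile> Mem z u"
  by (rule Mem_subst_left[OF Eq_sym])

section \<open>Set-theoretic formulas\<close>

text \<open>The formulas of Defs are written with named variables; \<open>inst_params P zs xs\<close> compiles
  \<open>P\<close> and then sends its parameter names \<open>zs\<close> to the variables \<open>xs\<close>. The name base 100
  only has to exceed the parameter names 1, 2, 3.\<close>

definition inst_params :: "nfm \<Rightarrow> nat list \<Rightarrow> nat list \<Rightarrow> fm" where
  "inst_params P zs xs = ren (\<lambda>i. if i < length zs then xs ! i else i - length zs) (tr zs P)"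

definition "Sub a b = inst_params (nSub 100 1 2) [1,2] [a,b]"
definition "Trans x = inst_params (nTrans 100 1) [1] [x]"
definition "Ord x = inst_params (nOrd 100 1) [1] [x]"
definition "Relpl a g = inst_params (nRelpl 100 1 2) [1,2] [a,g]"
definition "PlOrd a = inst_params (nPlOrd 100 1) [1] [a]"
definition "Sing z a = inst_params (nSing 100 1 2) [1,2] [z,a]"
definition "UPair z a b = inst_params (nDoub 100 1 2 3) [1,2,3] [z,a,b]"
definition "KPair p a b = inst_params (nPair 100 1 2 3) [1,2,3] [p,a,b]"
definition "InPair a b F = inst_params (nInPair 100 1 2 3) [1,2,3] [a,b,F]"
definition "IsPl a y = inst_params (nPL 100 1 2) [1,2] [a,y]"

lemmas named_defs = nIff_def nNeg_def nBAll_def nBEx_def nSub_def nTrans_def nOrd_def nRelpl_def nPlOrd_def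
  nPlUb_def nSing_def nDoub_def nPair_def nInPair_def nPL_def nInj_def nREM_def nExt_def nPairing_def
  nUnion_def nEmpty_def nInd_def nStrongInf_def dB_def

lemmas concept_defs = Sub_def Trans_def Ord_def Relpl_def PlOrd_def Sing_def UPair_def KPair_def InPair_def IsPl_def

lemmas unfold_defs = named_defs concept_defs inst_params_def inst_def lift_def shift1_def shift2_def Iff_def Neg_def

lemma Sub_unfold: "Sub a b = BAll a (Mem 0 (Suc b))" by (simp add: unfold_defs)
lemma SubI: "ikp_ctxt \<Gamma> \<Longrightarrow> (\<And>z. insert (Mem z a) \<Gamma> \<turnstile> Mem z b) \<Longrightarrow> \<Gamma> \<turnstile> Sub a b"
  unfolding Sub_unfold by (rule BAllI) auto
lemma SubE: "\<Gamma> \<turnstile> Sub a b \<Longrightarrow> \<Gamma> \<turnstile> Mem z a \<Longrightarrow> \<Gamma> \<turnstile> Mem z b"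
  unfolding Sub_unfold by (drule BAllE) auto

lemma Trans_unfold: "Trans x = BAll x (BAll 0 (Mem 0 (Suc (Suc x))))"
  by (simp add: unfold_defs)
lemma TransI: "ikp_ctxt \<Gamma> \<Longrightarrow> (\<And>y z. insert (Mem z y) (insert (Mem y x) \<Gamma>) \<turnstile> Mem z x) \<Longrightarrow> \<Gamma> \<turnstile> Trans x"
  unfolding Trans_unfold apply (rule BAllI, assumption) apply (simp add: inst_def)
  apply (rule BAllI) by (simp_all add: inst_def)
lemma TransE: "\<Gamma> \<turnstile> Trans x \<Longrightarrow> \<Gamma> \<turnstile> Mem y x \<Longrightarrow> \<Gamma> \<turnstile> Mem z y \<Longrightarrow> \<Gamma> \<turnstile> Mem z x"
  unfolding Trans_unfold apply (drule BAllE, assumption) apply (simp add: inst_def)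
  apply (drule BAllE, assumption) by (simp add: inst_def)

lemma Ord_unfold: "Ord x = Conj (Trans x) (BAll x (Trans 0))" by (simp add: unfold_defs)
lemma inst_Trans0[simp]: "inst (Trans 0) y = Trans y" by (simp add: unfold_defs)
lemma OrdI: "ikp_ctxt \<Gamma> \<Longrightarrow> \<Gamma> \<turnstile> Trans x \<Longrightarrow> (\<And>y. insert (Mem y x) \<Gamma> \<turnstile> Trans y) \<Longrightarrow> \<Gamma> \<turnstile> Ord x"
  unfolding Ord_unfold by (intro ConjI BAllI) auto
lemma Ord_Trans: "\<Gamma> \<turnstile> Ord x \<Longrightarrow> \<Gamma> \<turnstile> Trans x"
  unfolding Ord_unfold by (rule ConjE1)
lemma Ord_elem_Trans: "\<Gamma> \<turnstile> Ord x \<Longrightarrow> \<Gamma> \<turnstile> Mem y x \<Longrightarrow> \<Gamma> \<turnstile> Trans y"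
  unfolding Ord_unfold by (drule ConjE2, drule BAllE) auto

definition inst_map :: "nat \<Rightarrow> nat \<Rightarrow> nat" where "inst_map n z = (case n of 0 \<Rightarrow> z | Suc m \<Rightarrow> m)"
lemma inst_map_simps[simp]: "inst_map 0 z = z" "inst_map (Suc m) z = m"
  by (simp_all add: inst_map_def)

lemma inst_eq_ren: "inst A z = ren (\<lambda>n. inst_map n z) A" by (simp add: inst_def inst_map_def)

lemma ren_Sub[simp]: "ren f (Sub x y) = Sub (f x) (f y)" by (simp add: unfold_defs)
lemma ren_Trans[simp]: "ren f (Trans x) = Trans (f x)" by (simp add: unfold_defs)
lemma ren_Ord[simp]: "ren f (Ord x) = Ord (f x)" by (simp add: unfold_defs)
lemma ren_Relpl[simp]: "ren f (Relpl x y) = Relpl (f x) (f y)" by (simp add: unfold_defs)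
lemma ren_PlOrd[simp]: "ren f (PlOrd x) = PlOrd (f x)" by (simp add: unfold_defs)
lemma ren_Sing[simp]: "ren f (Sing x y) = Sing (f x) (f y)" by (simp add: unfold_defs)
lemma ren_UPair[simp]: "ren f (UPair x y z) = UPair (f x) (f y) (f z)" by (simp add: unfold_defs)
lemma ren_KPair[simp]: "ren f (KPair x y z) = KPair (f x) (f y) (f z)" by (simp add: unfold_defs)
lemma ren_InPair[simp]: "ren f (InPair x y z) = InPair (f x) (f y) (f z)" by (simp add: unfold_defs)
lemma ren_IsPl[simp]: "ren f (IsPl x y) = IsPl (f x) (f y)" by (simp add: unfold_defs)
lemma ren_Neg[simp]: "ren f (Neg A) = Neg (ren f A)" by (simp add: Neg_def)
lemma ren_Iff[simp]: "ren f (Iff A B) = Iff (ren f A) (ren f B)" by (simp add: Iff_def)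

lemma Relpl_unfold: "Relpl a g = BAll g (BAll (Suc a) (Imp (Sub 0 (Suc 0)) (Mem 0 (Suc (Suc g)))))"
  by (simp add: unfold_defs)
lemma RelplI: "ikp_ctxt \<Gamma> \<Longrightarrow>
    (\<And>d e. insert (Sub e d) (insert (Mem e a) (insert (Mem d g) \<Gamma>)) \<turnstile> Mem e g) \<Longrightarrow> \<Gamma> \<turnstile> Relpl a g"
  unfolding Relpl_unfold apply (rule BAllI, assumption) apply (simp add: inst_eq_ren)
  apply (rule BAllI) apply simp apply (simp add: inst_eq_ren) apply (rule ImpI) by simp
lemma RelplE: "\<Gamma> \<turnstile> Relpl a g \<Longrightarrow> \<Gamma> \<turnstile> Mem d g \<Longrightarrow> \<Gamma> \<turnstile> Mem e a \<Longrightarrow> \<Gamma> \<turnstile> Sub e d \<Longrightarrow> \<Gamma> \<turnstile> Mem e g"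
  unfolding Relpl_unfold apply (drule BAllE, assumption) apply (simp add: inst_eq_ren)
  apply (drule BAllE, assumption) apply (simp add: inst_eq_ren) by (erule ImpE)

lemma Sub_refl: "ikp_ctxt \<Gamma> \<Longrightarrow> \<Gamma> \<turnstile> Sub x x" apply (rule SubI, assumption) by (rule Hyp_insert)

lemma Relpl_refl: "ikp_ctxt \<Gamma> \<Longrightarrow> \<Gamma> \<turnstile> Relpl x x" apply (rule RelplI, assumption) by (rule Hyp, simp)

lemma Sub_subst_left: "\<Gamma> \<turnstile> Eq x y \<Longrightarrow> \<Gamma> \<turnstile> Sub x g \<Longrightarrow> \<Gamma> \<turnstile> Sub y g"
  using EqSubst[of \<Gamma> x y "Sub 0 (Suc g)"] by (simp add: inst_def)

lemma Sub_subst_right: "\<Gamma> \<turnstile> Eq v g \<Longrightarrow> \<Gamma> \<turnstile> Sub x v \<Longrightarrow> \<Gamma> \<turnstile> Sub x g"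
  using EqSubst[of \<Gamma> v g "Sub (Suc x) 0"] by (simp add: inst_def)

lemma Relpl_subst_left: "\<Gamma> \<turnstile> Eq v g \<Longrightarrow> \<Gamma> \<turnstile> Relpl v x \<Longrightarrow> \<Gamma> \<turnstile> Relpl g x"
  using EqSubst[of \<Gamma> v g "Relpl 0 (Suc x)"] by (simp add: inst_def)

lemma Sub_trans: assumes ok: "ikp_ctxt \<Gamma>" and "\<Gamma> \<turnstile> Sub x y" "\<Gamma> \<turnstile> Sub y z" shows "\<Gamma> \<turnstile> Sub x z"
  by (rule SubI[OF ok]) (rule SubE[OF weaken[OF assms(3)] SubE[OF weaken[OF assms(2)] Hyp_insert]])

lemma PlOrd_unfold: "PlOrd a = Conj (Ord a) (BAll a (All (Imp (Conj (Sub 0 (Suc 0)) (Relpl (Suc (Suc a)) 0))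
   (Conj (Mem 0 (Suc (Suc a))) (BAll (Suc (Suc a)) (Imp (Mem (Suc (Suc 0)) 0) (Mem (Suc 0) 0)))))))"
  by (simp add: unfold_defs)

lemma PlOrd_Ord: "\<Gamma> \<turnstile> PlOrd a \<Longrightarrow> \<Gamma> \<turnstile> Ord a" unfolding PlOrd_unfold by (rule ConjE1)
lemma PlOrd_plump: "\<Gamma> \<turnstile> PlOrd a \<Longrightarrow> \<Gamma> \<turnstile> Mem b a \<Longrightarrow> \<Gamma> \<turnstile> Sub g b \<Longrightarrow> \<Gamma> \<turnstile> Relpl a g \<Longrightarrow> \<Gamma> \<turnstile> Mem g a"
  unfolding PlOrd_unfold apply (drule ConjE2) apply (drule BAllE, assumption)
  apply (simp add: inst_eq_ren)
  apply (drule AllE[where x=g]) apply (simp add: inst_eq_ren)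
  apply (drule ImpE) apply (rule ConjI, assumption, assumption) by (erule ConjE1)
lemma PlOrdI: "ikp_ctxt \<Gamma> \<Longrightarrow> \<Gamma> \<turnstile> Ord a \<Longrightarrow>
  (\<And>b g. insert (Relpl a g) (insert (Sub g b) (insert (Mem b a) \<Gamma>)) \<turnstile> Mem g a) \<Longrightarrow>
  (\<And>b g d. insert (Mem b d) (insert (Mem d a) (insert (Relpl a g) (insert (Sub g b) (insert (Mem b a) \<Gamma>)))) \<turnstile> Mem g d)
  \<Longrightarrow> \<Gamma> \<turnstile> PlOrd a"
  unfolding PlOrd_unfold apply (rule ConjI, assumption) apply (rule BAllI, assumption)
  apply (simp add: inst_eq_ren)
  apply (rule AllI_inst) apply simp apply (simp add: inst_eq_ren) apply (rule ImpI)
  subgoal for b g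
    apply (rule cut[OF ConjE1[OF Hyp_insert]]) apply (rule cut[OF weaken[OF ConjE2[OF Hyp_insert]]])
    apply (rule ConjI) apply (rule deriv_mono, assumption) apply blast
    apply (rule BAllI) apply simp apply (simp add: inst_eq_ren) apply (rule ImpI)
    subgoal for d apply (rule deriv_mono) apply assumption by blast
    done
  done

lemma Compr_memD: "\<Gamma> \<turnstile> Compr s P \<Longrightarrow> \<Gamma> \<turnstile> Mem z s \<Longrightarrow> \<Gamma> \<turnstile> inst P z"
  by (drule AllE[where x=z]) (simp add: IffD1)
lemma Compr_memI: "\<Gamma> \<turnstile> Compr s P \<Longrightarrow> \<Gamma> \<turnstile> inst P z \<Longrightarrow> \<Gamma> \<turnstile> Mem z s"
  by (drule AllE[where x=z]) (simp add: IffD2)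
lemma ComprI: "ikp_ctxt \<Gamma> \<Longrightarrow> (\<And>z. insert (Mem z s) \<Gamma> \<turnstile> inst P z) \<Longrightarrow>
    (\<And>z. insert (inst P z) \<Gamma> \<turnstile> Mem z s)
  \<Longrightarrow> \<Gamma> \<turnstile> Compr s P"
  by (rule AllI_inst) (simp_all add: IffI)

lemma Sing_unfold: "Sing z a = Compr z (Eq 0 (Suc a))" by (simp add: unfold_defs)
lemma UPair_unfold: "UPair z a b = Compr z (Disj (Eq 0 (Suc a)) (Eq 0 (Suc b)))"
  by (simp add: unfold_defs)
lemma KPair_unfold: "KPair p a b = Compr p (Disj (Sing 0 (Suc a)) (UPair 0 (Suc a) (Suc b)))"
  by (simp add: unfold_defs)
lemma InPair_unfold: "InPair a b F = BEx F (KPair 0 (Suc a) (Suc b))" by (simp add: unfold_defs)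

lemma SingD: "\<Gamma> \<turnstile> Sing z a \<Longrightarrow> \<Gamma> \<turnstile> Mem w z \<Longrightarrow> \<Gamma> \<turnstile> Eq w a"
  unfolding Sing_unfold by (drule Compr_memD) (auto simp: inst_eq_ren)
lemma Sing_memI: "\<Gamma> \<turnstile> Sing z a \<Longrightarrow> \<Gamma> \<turnstile> Eq w a \<Longrightarrow> \<Gamma> \<turnstile> Mem w z"
  unfolding Sing_unfold by (rule Compr_memI) (auto simp: inst_eq_ren)
lemma UPairD: "\<Gamma> \<turnstile> UPair z a b \<Longrightarrow> \<Gamma> \<turnstile> Mem w z \<Longrightarrow> \<Gamma> \<turnstile> Disj (Eq w a) (Eq w b)"
  unfolding UPair_unfold by (drule Compr_memD) (auto simp: inst_eq_ren)
lemma UPair_memI: "\<Gamma> \<turnstile> UPair z a b \<Longrightarrow> \<Gamma> \<turnstile> Disj (Eq w a) (Eq w b) \<Longrightarrow> \<Gamma> \<turnstile> Mem w z"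
  unfolding UPair_unfold by (rule Compr_memI) (auto simp: inst_eq_ren)
lemma KPairD: "\<Gamma> \<turnstile> KPair p a b \<Longrightarrow> \<Gamma> \<turnstile> Mem z p \<Longrightarrow> \<Gamma> \<turnstile> Disj (Sing z a) (UPair z a b)"
  unfolding KPair_unfold by (drule Compr_memD) (auto simp: inst_eq_ren)
lemma KPair_memI: "\<Gamma> \<turnstile> KPair p a b \<Longrightarrow> \<Gamma> \<turnstile> Disj (Sing z a) (UPair z a b) \<Longrightarrow> \<Gamma> \<turnstile> Mem z p"
  unfolding KPair_unfold by (rule Compr_memI) (auto simp: inst_eq_ren)
lemma KPairI: "ikp_ctxt \<Gamma> \<Longrightarrow> (\<And>z. insert (Mem z p) \<Gamma> \<turnstile> Disj (Sing z a) (UPair z a b)) \<Longrightarrow>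
    (\<And>z. insert (Disj (Sing z a) (UPair z a b)) \<Gamma> \<turnstile> Mem z p) \<Longrightarrow> \<Gamma> \<turnstile> KPair p a b"
  unfolding KPair_unfold by (rule ComprI) (auto simp: inst_eq_ren)
lemma InPairI: "\<Gamma> \<turnstile> Mem p F \<Longrightarrow> \<Gamma> \<turnstile> KPair p a b \<Longrightarrow> \<Gamma> \<turnstile> InPair a b F"
  unfolding InPair_unfold by (rule BExI) (auto simp: inst_eq_ren)
lemma InPairE: "\<Gamma> \<turnstile> InPair a b F \<Longrightarrow> ikp_ctxt \<Gamma> \<Longrightarrow>
    (\<And>p. insert (Mem p F) (insert (KPair p a b) \<Gamma>) \<turnstile> C) \<Longrightarrow> \<Gamma> \<turnstile> C"
  unfolding InPair_unfold by (erule BExE) (auto simp: inst_eq_ren)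

section \<open>Set existence\<close>

lemma delta0_ren: "delta0 A \<Longrightarrow> delta0 (ren f A)"
proof (induction arbitrary: f rule: delta0.induct)
  case (7 A y) then show ?case using delta0.intros(7) by simp
next
  case (8 A y) then show ?case using delta0.intros(8) by simp
qed (auto intro: delta0.intros)

lemma inst_Sep_body: "inst (All (ren (up (up (\<lambda>n. case n of 0 \<Rightarrow> a | Suc m \<Rightarrow> m)))
     (Iff (Mem 0 1) (Conj (Mem 0 2) (ren shift1 (ren shift1 \<psi>)))))) s
   = Compr s (Conj (Mem 0 (Suc a)) \<psi>)"
proof -
  have "ren (up (\<lambda>n. case n of 0 \<Rightarrow> s | Suc m \<Rightarrow> m)) (ren (up (up (\<lambda>n. case n of 0 \<Rightarrow> a | Suc m \<Rightarrow> m))) (ren shift1 (ren shift1 \<psi>)))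
     = ren (\<lambda>a. a) \<psi>"
    unfolding ren_comp
    by (rule arg_cong[where f="\<lambda>g. ren g \<psi>"]) (rule ext, simp add: shift1_def up_def split: nat.split)
  then show ?thesis by (simp add: inst_def ren_id numeral_2_eq_2)
qed

lemma SepE: assumes "ikp_ctxt \<Gamma>" "delta0 \<psi>"
  and "\<And>s. insert (Compr s (Conj (Mem 0 (Suc a)) \<psi>)) \<Gamma> \<turnstile> C"
  shows "\<Gamma> \<turnstile> C"
proof -
  have "\<Gamma> \<turnstile> Sep (ren shift1 \<psi>)" using IKP_Sep assms(1,2) delta0_ren ikp_ctxt_def by blast
  then have "\<Gamma> \<turnstile> inst (Ex (All (Iff (Mem 0 1) (Conj (Mem 0 2) (ren shift1 (ren shift1 \<psi>)))))) a"
    unfolding Sep_def by (rule AllE)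
  then have "\<Gamma> \<turnstile> Ex (All (ren (up (up (\<lambda>n. case n of 0 \<Rightarrow> a | Suc m \<Rightarrow> m)))
     (Iff (Mem 0 1) (Conj (Mem 0 2) (ren shift1 (ren shift1 \<psi>))))))"
    by (simp add: inst_def del: ren.simps(4,6))
  then show ?thesis
    apply (rule ExE_inst[OF _ assms(1)]) unfolding inst_Sep_body by (rule assms(3))
qed

lemma inst_SetInd_hyp: "inst (All (Imp (Mem 0 1) (ren shift1 \<phi>))) a = BAll a \<phi>"
proof -
  have "ren (up (\<lambda>n. case n of 0 \<Rightarrow> a | Suc m \<Rightarrow> m)) (ren shift1 \<phi>) = ren (\<lambda>a. a) \<phi>"
    unfolding ren_comp
    by (rule arg_cong[where f="\<lambda>g. ren g \<phi>"]) (rule ext, simp add: shift1_def up_def split: nat.split)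
  then show ?thesis by (simp add: inst_def ren_id)
qed

lemma set_induct: assumes "ikp_ctxt \<Gamma>" "\<And>a. insert (BAll a \<phi>) \<Gamma> \<turnstile> inst \<phi> a"
  shows "\<Gamma> \<turnstile> inst \<phi> x"
proof -
  have "\<Gamma> \<turnstile> SetInd \<phi>" using IKP_SetInd assms(1) ikp_ctxt_def by blast
  moreover have "\<Gamma> \<turnstile> All (Imp (All (Imp (Mem 0 1) (ren shift1 \<phi>))) \<phi>)"
    apply (rule AllI_inst[OF assms(1)]) apply (simp only: inst_Imp inst_SetInd_hyp)
      by (rule ImpI) (rule assms(2))
  ultimately have "\<Gamma> \<turnstile> All \<phi>" unfolding SetInd_def by (rule ImpE)
  then show ?thesis by (rule AllE)
qed

lemma AllE_All: "\<Gamma> \<turnstile> All (All A) \<Longrightarrow> \<Gamma> \<turnstile> All (ren (up (\<lambda>n. case n of 0 \<Rightarrow> a | Suc m \<Rightarrow> m)) A)"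
  by (drule AllE[where x=a]) (simp add: inst_def)

lemma ExtI:
  assumes "ikp_ctxt \<Gamma>" "\<And>z. insert (Mem z a) \<Gamma> \<turnstile> Mem z b" "\<And>z. insert (Mem z b) \<Gamma> \<turnstile> Mem z a"
  shows "\<Gamma> \<turnstile> Eq a b"
proof -
  have h: "\<Gamma> \<turnstile> All (All (Imp (All (Conj (Imp (Mem 0 (Suc (Suc 0))) (Mem 0 (Suc 0)))
              (Imp (Mem 0 (Suc 0)) (Mem 0 (Suc (Suc 0)))))) (Eq (Suc 0) 0)))"
    using IKP_Ext assms(1) ikp_ctxt_def by (simp add: unfold_defs)
  have "\<Gamma> \<turnstile> Imp (Compr a (Mem 0 (Suc b))) (Eq a b)"
    using AllE[OF AllE_All[OF h, of a], of b] by (simp add: unfold_defs)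
  moreover have "\<Gamma> \<turnstile> Compr a (Mem 0 (Suc b))"
    by (rule ComprI[OF assms(1)]) (simp_all add: assms(2,3))
  ultimately show ?thesis by (rule ImpE)
qed

definition "IsEmpty e = BAll e Fls"
lemma ex_IsEmpty: "ikp_ctxt \<Gamma> \<Longrightarrow> (\<And>e. insert (IsEmpty e) \<Gamma> \<turnstile> C) \<Longrightarrow> \<Gamma> \<turnstile> C"
proof -
  assume a: "ikp_ctxt \<Gamma>" "\<And>e. insert (IsEmpty e) \<Gamma> \<turnstile> C"
  have "\<Gamma> \<turnstile> Ex (BAll 0 Fls)" using IKP_Empty a(1) ikp_ctxt_def by (simp add: unfold_defs)
  then show ?thesis apply (rule ExE_inst[OF _ a(1)]) using a(2) by (simp add: IsEmpty_def inst_def)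
qed
lemma IsEmptyE: "\<Gamma> \<turnstile> IsEmpty e \<Longrightarrow> \<Gamma> \<turnstile> Mem z e \<Longrightarrow> \<Gamma> \<turnstile> C"
  unfolding IsEmpty_def by (drule BAllE) (auto intro: FlsE)

lemma ex_bound_pair: "ikp_ctxt \<Gamma> \<Longrightarrow> (\<And>w. insert (Mem a w) (insert (Mem b w) \<Gamma>) \<turnstile> C) \<Longrightarrow> \<Gamma> \<turnstile> C"
proof -
  assume a: "ikp_ctxt \<Gamma>" "\<And>w. insert (Mem a w) (insert (Mem b w) \<Gamma>) \<turnstile> C"
  have h: "\<Gamma> \<turnstile> All (All (Ex (Conj (Mem (Suc (Suc 0)) 0) (Mem (Suc 0) 0))))"
    using IKP_Pairing a(1) ikp_ctxt_def by (simp add: unfold_defs)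
  have "\<Gamma> \<turnstile> Ex (Conj (Mem (Suc a) 0) (Mem (Suc b) 0))" using AllE[OF AllE_All[OF h, of a], of b]
    by (simp add: unfold_defs)
  then show ?thesis apply (rule ExE_inst[OF _ a(1)]) apply (simp add: inst_def)
    apply (rule cut[OF ConjE1[OF Hyp_insert]]) apply (rule cut[OF weaken[OF ConjE2[OF Hyp_insert]]])
    apply (rule deriv_mono[OF a(2)]) by blast
qed

definition "UnionBound u a = BAll a (BAll 0 (Mem 0 (Suc (Suc u))))"
lemma ex_UnionBound: "ikp_ctxt \<Gamma> \<Longrightarrow> (\<And>u. insert (UnionBound u a) \<Gamma> \<turnstile> C) \<Longrightarrow> \<Gamma> \<turnstile> C"
proof -
  assume a: "ikp_ctxt \<Gamma>" "\<And>u. insert (UnionBound u a) \<Gamma> \<turnstile> C"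
  have h: "\<Gamma> \<turnstile> All (Ex (BAll (Suc 0) (BAll 0 (Mem 0 (Suc (Suc 0))))))"
    using IKP_Union a(1) ikp_ctxt_def by (simp add: unfold_defs)
  have "\<Gamma> \<turnstile> Ex (BAll (Suc a) (BAll 0 (Mem 0 (Suc (Suc 0)))))" using AllE[OF h, of a]
    by (simp add: unfold_defs)
  then show ?thesis apply (rule ExE_inst[OF _ a(1)]) using a(2)
    by (simp add: UnionBound_def inst_def)
qed
lemma UnionBoundD: "\<Gamma> \<turnstile> UnionBound u a \<Longrightarrow> \<Gamma> \<turnstile> Mem c a \<Longrightarrow> \<Gamma> \<turnstile> Mem d c \<Longrightarrow> \<Gamma> \<turnstile> Mem d u"
  unfolding UnionBound_def apply (drule BAllE, assumption) apply (simp add: inst_def)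
  apply (drule BAllE, assumption) by (simp add: inst_def)

lemma ex_Compr: assumes ok: "ikp_ctxt \<Gamma>" and d: "delta0 \<psi>"
  and sup: "\<And>z. insert (inst \<psi> z) \<Gamma> \<turnstile> Mem z u"
  and c: "\<And>s. insert (Compr s \<psi>) \<Gamma> \<turnstile> C"
  shows "\<Gamma> \<turnstile> C"
proof (rule SepE[OF ok d, where a=u])
  fix s
  let ?H = "insert (Compr s (Conj (Mem 0 (Suc u)) \<psi>)) \<Gamma>"
  have S: "?H \<turnstile> Compr s (Conj (Mem 0 (Suc u)) \<psi>)" by (rule Hyp_insert)
  have "?H \<turnstile> Compr s \<psi>"
  proof (rule ComprI)
    show "ikp_ctxt ?H" using ok by simp
  next
    fix z show "insert (Mem z s) ?H \<turnstile> inst \<psi> z"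
      using Compr_memD[OF weaken[OF S] Hyp_insert, of z] by (simp add: ConjE2)
  next
    fix z show "insert (inst \<psi> z) ?H \<turnstile> Mem z s"
      apply (rule Compr_memI[OF weaken[OF S]]) apply simp apply (rule ConjI)
       apply (rule deriv_mono[OF sup]) apply blast by (rule Hyp_insert)
  qed
  then show "?H \<turnstile> C" by (rule cut) (rule deriv_mono[OF c], blast)
qed

lemma ex_UPair: assumes ok: "ikp_ctxt \<Gamma>" and c: "\<And>s. insert (UPair s a b) \<Gamma> \<turnstile> C" shows "\<Gamma> \<turnstile> C"
proof (rule ex_bound_pair[OF ok, of a b])
  fix w
  let ?G = "insert (Mem a w) (insert (Mem b w) \<Gamma>)"
  show "?G \<turnstile> C"
  proof (rule ex_Compr[where \<psi>="Disj (Eq 0 (Suc a)) (Eq 0 (Suc b))" and u=w])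
    show "ikp_ctxt ?G" using ok by simp
    show "delta0 (Disj (Eq 0 (Suc a)) (Eq 0 (Suc b)))" by (intro delta0.intros)
  next
    fix z show "insert (inst (Disj (Eq 0 (Suc a)) (Eq 0 (Suc b))) z) ?G \<turnstile> Mem z w"
      apply (simp add: inst_def) apply (rule DisjE[OF Hyp_insert])
      apply (rule Mem_subst_left_sym[OF Hyp_insert]) apply (rule Hyp) apply simp
      apply (rule Mem_subst_left_sym[OF Hyp_insert]) apply (rule Hyp) by simp
  next
    fix s show "insert (Compr s (Disj (Eq 0 (Suc a)) (Eq 0 (Suc b)))) ?G \<turnstile> C"
      unfolding UPair_unfold[symmetric] by (rule deriv_mono[OF c]) blast
  qed
qed

lemma ex_Sing: assumes ok: "ikp_ctxt \<Gamma>" and c: "\<And>s. insert (Sing s a) \<Gamma> \<turnstile> C" shows "\<Gamma> \<turnstile> C"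
proof (rule ex_bound_pair[OF ok, of a a])
  fix w
  let ?G = "insert (Mem a w) (insert (Mem a w) \<Gamma>)"
  show "?G \<turnstile> C"
  proof (rule ex_Compr[where \<psi>="Eq 0 (Suc a)" and u=w])
    show "ikp_ctxt ?G" using ok by simp
    show "delta0 (Eq 0 (Suc a))" by (intro delta0.intros)
  next
    fix z show "insert (inst (Eq 0 (Suc a)) z) ?G \<turnstile> Mem z w"
      apply (simp add: inst_def) apply (rule Mem_subst_left_sym[OF Hyp_insert]) apply (rule Hyp)
        by simp
  next
    fix s show "insert (Compr s (Eq 0 (Suc a))) ?G \<turnstile> C"
      unfolding Sing_unfold[symmetric] by (rule deriv_mono[OF c]) blast
  qed
qed

definition "Union2 s a b = Compr s (Disj (Mem 0 (Suc a)) (Mem 0 (Suc b)))"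
lemma ex_Union2: assumes ok: "ikp_ctxt \<Gamma>" and c: "\<And>s. insert (Union2 s a b) \<Gamma> \<turnstile> C" shows "\<Gamma> \<turnstile> C"
proof (rule ex_bound_pair[OF ok, of a b])
  fix w
  let ?G = "insert (Mem a w) (insert (Mem b w) \<Gamma>)"
  show "?G \<turnstile> C"
  proof (rule ex_UnionBound[of _ w])
    show "ikp_ctxt ?G" using ok by simp
  next
    fix u
    let ?H = "insert (UnionBound u w) ?G"
    show "?H \<turnstile> C"
    proof (rule ex_Compr[where \<psi>="Disj (Mem 0 (Suc a)) (Mem 0 (Suc b))" and u=u])
      show "ikp_ctxt ?H" using ok by simp
      show "delta0 (Disj (Mem 0 (Suc a)) (Mem 0 (Suc b)))" by (intro delta0.intros)
    next
      fix z show "insert (inst (Disj (Mem 0 (Suc a)) (Mem 0 (Suc b))) z) ?H \<turnstile> Mem z u"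
        apply (simp add: inst_def) apply (rule DisjE[OF Hyp_insert])
        apply (rule UnionBoundD[where c=a and a=w]) apply (rule Hyp) apply simp apply (rule Hyp)
        apply simp apply (rule Hyp_insert)
        apply (rule UnionBoundD[where c=b and a=w]) apply (rule Hyp) apply simp apply (rule Hyp)
        apply simp by (rule Hyp_insert)
    next
      fix s show "insert (Compr s (Disj (Mem 0 (Suc a)) (Mem 0 (Suc b)))) ?H \<turnstile> C"
        unfolding Union2_def[symmetric] by (rule deriv_mono[OF c]) blast
    qed
  qed
qed

definition "Set4 s a b c d = Compr s (Disj (Disj (Eq 0 (Suc a)) (Eq 0 (Suc b))) (Disj (Eq 0 (Suc c)) (Eq 0 (Suc d))))"

lemma ex_Set4: assumes ok: "ikp_ctxt \<Gamma>" and c: "\<And>s. insert (Set4 s a b c d) \<Gamma> \<turnstile> C" shows "\<Gamma> \<turnstile> C"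
proof (rule ex_UPair[OF ok, of a b])
  fix s1 let ?G1 = "insert (UPair s1 a b) \<Gamma>"
  have ok1: "ikp_ctxt ?G1" using ok by simp
  show "?G1 \<turnstile> C"
  proof (rule ex_UPair[OF ok1, of c d])
    fix s2 let ?G2 = "insert (UPair s2 c d) ?G1"
    have ok2: "ikp_ctxt ?G2" using ok by simp
    show "?G2 \<turnstile> C"
    proof (rule ex_Union2[OF ok2, of s1 s2])
      fix u let ?G3 = "insert (Union2 u s1 s2) ?G2"
      have ok3: "ikp_ctxt ?G3" using ok by simp
      let ?\<psi> = "Disj (Disj (Eq 0 (Suc a)) (Eq 0 (Suc b))) (Disj (Eq 0 (Suc c)) (Eq 0 (Suc d)))"
      show "?G3 \<turnstile> C"
      proof (rule ex_Compr[OF ok3, where \<psi>="?\<psi>" and u=u])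
        show "delta0 ?\<psi>" by (intro delta0.intros)
      next
        fix z let ?H = "insert (inst ?\<psi> z) ?G3"
        have U: "?H \<turnstile> Union2 u s1 s2" by (rule Hyp) simp
        have D1: "?H \<turnstile> UPair s1 a b" by (rule Hyp) simp
        have D2: "?H \<turnstile> UPair s2 c d" by (rule Hyp) simp
        have "?H \<turnstile> Disj (Mem z s1) (Mem z s2)"
          apply (rule DisjE[of _ "Disj (Eq z a) (Eq z b)" "Disj (Eq z c) (Eq z d)"])
          apply (rule Hyp) apply (simp add: inst_def)
          apply (rule DisjI1) apply (rule UPair_memI[OF weaken[OF D1]]) apply (rule Hyp_insert)
          apply (rule DisjI2) apply (rule UPair_memI[OF weaken[OF D2]]) by (rule Hyp_insert)
        then have "?H \<turnstile> inst (Disj (Mem 0 (Suc s1)) (Mem 0 (Suc s2))) z" by (simp add: inst_def)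
        then show "?H \<turnstile> Mem z u" using U unfolding Union2_def by (intro Compr_memI)
      next
        fix s show "insert (Compr s ?\<psi>) ?G3 \<turnstile> C"
          unfolding Set4_def[symmetric] by (rule deriv_mono[OF c]) blast
      qed
    qed
  qed
qed

definition "Succ s a = Compr s (Disj (Mem 0 (Suc a)) (Eq 0 (Suc a)))"
lemma ex_Succ: assumes ok: "ikp_ctxt \<Gamma>" and c: "\<And>s. insert (Succ s a) \<Gamma> \<turnstile> C" shows "\<Gamma> \<turnstile> C"
proof (rule ex_Sing[OF ok, of a])
  fix t let ?G1 = "insert (Sing t a) \<Gamma>"
  have ok1: "ikp_ctxt ?G1" using ok by simp
  show "?G1 \<turnstile> C"
  proof (rule ex_Union2[OF ok1, of a t])
    fix u let ?G3 = "insert (Union2 u a t) ?G1"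
    have ok3: "ikp_ctxt ?G3" using ok by simp
    let ?\<psi> = "Disj (Mem 0 (Suc a)) (Eq 0 (Suc a))"
    show "?G3 \<turnstile> C"
    proof (rule ex_Compr[OF ok3, where \<psi>="?\<psi>" and u=u])
      show "delta0 ?\<psi>" by (intro delta0.intros)
    next
      fix z let ?H = "insert (inst ?\<psi> z) ?G3"
      have U: "?H \<turnstile> Union2 u a t" by (rule Hyp) simp
      have D1: "?H \<turnstile> Sing t a" by (rule Hyp) simp
      have "?H \<turnstile> Disj (Mem z a) (Mem z t)"
        apply (rule DisjE[of _ "Mem z a" "Eq z a"])
        apply (rule Hyp) apply (simp add: inst_def)
        apply (rule DisjI1) apply (rule Hyp_insert)
        apply (rule DisjI2) apply (rule Sing_memI[OF weaken[OF D1]]) by (rule Hyp_insert)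
      then have "?H \<turnstile> inst (Disj (Mem 0 (Suc a)) (Mem 0 (Suc t))) z" by (simp add: inst_def)
      then show "?H \<turnstile> Mem z u" using U unfolding Union2_def by (intro Compr_memI)
    next
      fix s show "insert (Compr s ?\<psi>) ?G3 \<turnstile> C"
        unfolding Succ_def[symmetric] by (rule deriv_mono[OF c]) blast
    qed
  qed
qed

lemma Set4E: assumes "\<Gamma> \<turnstile> Set4 s a b c d" "\<Gamma> \<turnstile> Mem z s"
  "insert (Eq z a) \<Gamma> \<turnstile> C" "insert (Eq z b) \<Gamma> \<turnstile> C" "insert (Eq z c) \<Gamma> \<turnstile> C" "insert (Eq z d) \<Gamma> \<turnstile> C"
  shows "\<Gamma> \<turnstile> C"
proof -
  have "\<Gamma> \<turnstile> Disj (Disj (Eq z a) (Eq z b)) (Disj (Eq z c) (Eq z d))"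
    using Compr_memD[OF assms(1)[unfolded Set4_def] assms(2)] by (simp add: inst_def)
  then show ?thesis
    apply (rule DisjE)
    apply (rule DisjE[OF Hyp_insert]) apply (rule deriv_mono[OF assms(3)], blast)
    apply (rule deriv_mono[OF assms(4)], blast)
    apply (rule DisjE[OF Hyp_insert]) apply (rule deriv_mono[OF assms(5)], blast)
      by (rule deriv_mono[OF assms(6)], blast)
qed

lemma Set4I1: "\<Gamma> \<turnstile> Set4 s a b c d \<Longrightarrow> \<Gamma> \<turnstile> Mem a s"
  unfolding Set4_def apply (rule Compr_memI, assumption) apply (simp add: inst_def)
    by (rule DisjI1, rule DisjI1, rule EqRefl)

lemma Set4I2: "\<Gamma> \<turnstile> Set4 s a b c d \<Longrightarrow> \<Gamma> \<turnstile> Mem b s"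
  unfolding Set4_def apply (rule Compr_memI, assumption) apply (simp add: inst_def)
    by (rule DisjI1, rule DisjI2, rule EqRefl)

lemma Set4I3: "\<Gamma> \<turnstile> Set4 s a b c d \<Longrightarrow> \<Gamma> \<turnstile> Mem c s"
  unfolding Set4_def apply (rule Compr_memI, assumption) apply (simp add: inst_def)
    by (rule DisjI2, rule DisjI1, rule EqRefl)

lemma Set4I4: "\<Gamma> \<turnstile> Set4 s a b c d \<Longrightarrow> \<Gamma> \<turnstile> Mem d s"
  unfolding Set4_def apply (rule Compr_memI, assumption) apply (simp add: inst_def)
    by (rule DisjI2, rule DisjI2, rule EqRefl)

lemma Union2E:
  assumes "\<Gamma> \<turnstile> Union2 s a b" "\<Gamma> \<turnstile> Mem z s" "insert (Mem z a) \<Gamma> \<turnstile> C" "insert (Mem z b) \<Gamma> \<turnstile> C"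
  shows "\<Gamma> \<turnstile> C"
  using Compr_memD[OF assms(1)[unfolded Union2_def] assms(2)] apply (simp add: inst_def)
  apply (erule DisjE) by (rule assms(3), rule assms(4))

lemma Union2I1: "\<Gamma> \<turnstile> Union2 s a b \<Longrightarrow> \<Gamma> \<turnstile> Mem z a \<Longrightarrow> \<Gamma> \<turnstile> Mem z s"
  unfolding Union2_def apply (rule Compr_memI, assumption) apply (simp add: inst_def)
    by (rule DisjI1)

lemma Union2I2: "\<Gamma> \<turnstile> Union2 s a b \<Longrightarrow> \<Gamma> \<turnstile> Mem z b \<Longrightarrow> \<Gamma> \<turnstile> Mem z s"
  unfolding Union2_def apply (rule Compr_memI, assumption) apply (simp add: inst_def)
    by (rule DisjI2)

lemma SuccE: assumes "\<Gamma> \<turnstile> Succ s a" "\<Gamma> \<turnstile> Mem z s" "insert (Mem z a) \<Gamma> \<turnstile> C" "insert (Eq z a) \<Gamma> \<turnstile> C"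
  shows "\<Gamma> \<turnstile> C"
  using Compr_memD[OF assms(1)[unfolded Succ_def] assms(2)] apply (simp add: inst_def)
  apply (erule DisjE) by (rule assms(3), rule assms(4))

lemma SuccI1: "\<Gamma> \<turnstile> Succ s a \<Longrightarrow> \<Gamma> \<turnstile> Mem z a \<Longrightarrow> \<Gamma> \<turnstile> Mem z s"
  unfolding Succ_def apply (rule Compr_memI, assumption) apply (simp add: inst_def) by (rule DisjI1)

lemma SuccI2: "\<Gamma> \<turnstile> Succ s a \<Longrightarrow> \<Gamma> \<turnstile> Eq z a \<Longrightarrow> \<Gamma> \<turnstile> Mem z s"
  unfolding Succ_def apply (rule Compr_memI, assumption) apply (simp add: inst_def) by (rule DisjI2)

lemma Sing_unique: assumes "ikp_ctxt \<Gamma>" "\<Gamma> \<turnstile> Sing z a" "\<Gamma> \<turnstile> Sing s a" shows "\<Gamma> \<turnstile> Eq z s"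
  apply (rule ExtI[OF assms(1)])
  apply (rule Sing_memI[OF weaken[OF assms(3)]]) apply (rule SingD[OF weaken[OF assms(2)]])
  apply (rule Hyp_insert)
  apply (rule Sing_memI[OF weaken[OF assms(2)]]) apply (rule SingD[OF weaken[OF assms(3)]])
    by (rule Hyp_insert)

lemma UPair_unique: assumes "ikp_ctxt \<Gamma>" "\<Gamma> \<turnstile> UPair z a b" "\<Gamma> \<turnstile> UPair s a b" shows "\<Gamma> \<turnstile> Eq z s"
  apply (rule ExtI[OF assms(1)])
  apply (rule UPair_memI[OF weaken[OF assms(3)]]) apply (rule UPairD[OF weaken[OF assms(2)]])
  apply (rule Hyp_insert)
  apply (rule UPair_memI[OF weaken[OF assms(2)]]) apply (rule UPairD[OF weaken[OF assms(3)]])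
    by (rule Hyp_insert)

lemma Sing_subst: "\<Gamma> \<turnstile> Eq s z \<Longrightarrow> \<Gamma> \<turnstile> Sing s a \<Longrightarrow> \<Gamma> \<turnstile> Sing z a"
  using EqSubst[of \<Gamma> s z "Sing 0 (Suc a)"] by (simp add: inst_def)
lemma UPair_subst: "\<Gamma> \<turnstile> Eq s z \<Longrightarrow> \<Gamma> \<turnstile> UPair s a b \<Longrightarrow> \<Gamma> \<turnstile> UPair z a b"
  using EqSubst[of \<Gamma> s z "UPair 0 (Suc a) (Suc b)"] by (simp add: inst_def)

lemma ex_KPair: assumes ok: "ikp_ctxt \<Gamma>" and c: "\<And>p. insert (KPair p a b) \<Gamma> \<turnstile> C" shows "\<Gamma> \<turnstile> C"
proof (rule ex_Sing[OF ok, of a])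
  fix s let ?G1 = "insert (Sing s a) \<Gamma>"
  have ok1: "ikp_ctxt ?G1" using ok by simp
  show "?G1 \<turnstile> C"
  proof (rule ex_UPair[OF ok1, of a b])
    fix d let ?G2 = "insert (UPair d a b) ?G1"
    have ok2: "ikp_ctxt ?G2" using ok by simp
    show "?G2 \<turnstile> C"
    proof (rule ex_UPair[OF ok2, of s d])
      fix q let ?G3 = "insert (UPair q s d) ?G2"
      have ok3: "ikp_ctxt ?G3" using ok by simp
      have S: "?G3 \<turnstile> Sing s a" by (rule Hyp) simp
      have D: "?G3 \<turnstile> UPair d a b" by (rule Hyp) simp
      have Q: "?G3 \<turnstile> UPair q s d" by (rule Hyp) simp
      have "?G3 \<turnstile> KPair q a b"
      proof (rule KPairI[OF ok3])
        fix z
        show "insert (Mem z q) ?G3 \<turnstile> Disj (Sing z a) (UPair z a b)"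
          apply (rule DisjE[OF UPairD[OF weaken[OF Q] Hyp_insert]])
          apply (rule DisjI1) apply (rule Sing_subst[OF Eq_sym[OF Hyp_insert]])
          apply (rule deriv_mono[OF S]) apply blast
          apply (rule DisjI2) apply (rule UPair_subst[OF Eq_sym[OF Hyp_insert]])
          apply (rule deriv_mono[OF D]) by blast
      next
        fix z
        show "insert (Disj (Sing z a) (UPair z a b)) ?G3 \<turnstile> Mem z q"
          apply (rule DisjE[OF Hyp_insert])
          apply (rule UPair_memI[OF deriv_mono[OF Q]]) apply blast apply (rule DisjI1)
          apply (rule Sing_unique) using ok apply simp apply (rule Hyp_insert)
          apply (rule deriv_mono[OF S]) apply blast
          apply (rule UPair_memI[OF deriv_mono[OF Q]]) apply blast apply (rule DisjI2)
          apply (rule UPair_unique) using ok apply simp apply (rule Hyp_insert)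
          apply (rule deriv_mono[OF D]) by blast
      qed
      then show "?G3 \<turnstile> C" by (rule cut) (rule deriv_mono[OF c], blast)
    qed
  qed
qed

lemma KPair_inj1: assumes ok: "ikp_ctxt \<Gamma>" and P: "\<Gamma> \<turnstile> KPair p a b" and Q: "\<Gamma> \<turnstile> KPair p c d"
  shows "\<Gamma> \<turnstile> Eq a c"
proof (rule ex_Sing[OF ok, of a])
  fix s let ?G = "insert (Sing s a) \<Gamma>"
  have S: "?G \<turnstile> Sing s a" by (rule Hyp_insert)
  have sp: "?G \<turnstile> Mem s p" by (rule KPair_memI[OF weaken[OF P]]) (rule DisjI1[OF S])
  show "?G \<turnstile> Eq a c"
    apply (rule DisjE[OF KPairD[OF weaken[OF Q] sp]])
    apply (rule SingD[OF Hyp_insert]) apply (rule Sing_memI[OF weaken[OF S] EqRefl])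
    apply (rule Eq_sym) apply (rule SingD[OF weaken[OF S]]) apply (rule UPair_memI[OF Hyp_insert])
    by (rule DisjI1[OF EqRefl])
qed

lemma KPair_inj2_aux: assumes ok: "ikp_ctxt \<Gamma>" and P: "\<Gamma> \<turnstile> KPair p a b" and Q: "\<Gamma> \<turnstile> KPair p c d"
  and bc: "\<Gamma> \<turnstile> Eq b c" shows "\<Gamma> \<turnstile> Eq b d"
proof (rule ex_UPair[OF ok, of c d])
  fix u let ?G = "insert (UPair u c d) \<Gamma>"
  have ac: "?G \<turnstile> Eq a c" using KPair_inj1[OF ok P Q] by (rule weaken)
  have U: "?G \<turnstile> UPair u c d" by (rule Hyp_insert)
  have up: "?G \<turnstile> Mem u p" by (rule KPair_memI[OF weaken[OF Q]]) (rule DisjI2[OF U])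
  have du: "?G \<turnstile> Mem d u" by (rule UPair_memI[OF U]) (rule DisjI2[OF EqRefl])
  have ba: "?G \<turnstile> Eq b a" by (rule Eq_trans[OF weaken[OF bc] Eq_sym[OF ac]])
  show "?G \<turnstile> Eq b d"
    apply (rule DisjE[OF KPairD[OF weaken[OF P] up]])
    apply (rule Eq_trans[OF weaken[OF ba]]) apply (rule Eq_sym)
    apply (rule SingD[OF Hyp_insert weaken[OF du]])
    apply (rule DisjE[OF UPairD[OF Hyp_insert weaken[OF du]]])
    apply (rule Eq_trans[OF deriv_mono[OF ba]]) apply blast apply (rule Eq_sym[OF Hyp_insert])
    by (rule Eq_sym[OF Hyp_insert])
qed

lemma KPair_inj2: assumes ok: "ikp_ctxt \<Gamma>" and P: "\<Gamma> \<turnstile> KPair p a b" and Q: "\<Gamma> \<turnstile> KPair p c d"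
  shows "\<Gamma> \<turnstile> Eq b d"
proof (rule ex_UPair[OF ok, of a b])
  fix t let ?G = "insert (UPair t a b) \<Gamma>"
  have T: "?G \<turnstile> UPair t a b" by (rule Hyp_insert)
  have tp: "?G \<turnstile> Mem t p" by (rule KPair_memI[OF weaken[OF P]]) (rule DisjI2[OF T])
  have bt: "?G \<turnstile> Mem b t" by (rule UPair_memI[OF T]) (rule DisjI2[OF EqRefl])
  show "?G \<turnstile> Eq b d"
    apply (rule DisjE[OF KPairD[OF weaken[OF Q] tp]])
    apply (rule KPair_inj2_aux[OF _ weaken[OF weaken[OF P]] weaken[OF weaken[OF Q]]]) using ok
    apply simp
    apply (rule SingD[OF Hyp_insert weaken[OF bt]])
    apply (rule DisjE[OF UPairD[OF Hyp_insert weaken[OF bt]]])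
    apply (rule KPair_inj2_aux[OF _ deriv_mono[OF P] deriv_mono[OF Q]]) using ok apply simp
    apply blast apply blast apply (rule Hyp_insert)
    by (rule Hyp_insert)
qed

lemma not_Mem_self: assumes ok: "ikp_ctxt \<Gamma>" shows "\<Gamma> \<turnstile> Neg (Mem x x)"
proof -
  have "\<Gamma> \<turnstile> inst (Neg (Mem 0 0)) x"
  proof (rule set_induct[OF ok])
    fix a let ?G = "insert (BAll a (Neg (Mem 0 0))) \<Gamma>"
    let ?H = "insert (Mem a a) ?G"
    have IH: "?H \<turnstile> BAll a (Neg (Mem 0 0))" by (rule Hyp) simp
    have "?H \<turnstile> inst (Neg (Mem 0 0)) a" by (rule BAllE[OF IH Hyp_insert])
    then have "?H \<turnstile> Neg (Mem a a)" by (simp add: inst_def)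
    then have "?H \<turnstile> Fls" using Hyp_insert by (rule NegE)
    then show "?G \<turnstile> inst (Neg (Mem 0 0)) a" by (simp add: inst_def NegI)
  qed
  then show ?thesis by (simp add: inst_def)
qed

lemma Ord_elem: assumes ok: "ikp_ctxt \<Gamma>" and o: "\<Gamma> \<turnstile> Ord a" and y: "\<Gamma> \<turnstile> Mem y a" shows "\<Gamma> \<turnstile> Ord y"
proof (rule OrdI[OF ok])
  show "\<Gamma> \<turnstile> Trans y" by (rule Ord_elem_Trans[OF o y])
  fix z show "insert (Mem z y) \<Gamma> \<turnstile> Trans z"
    apply (rule Ord_elem_Trans[OF weaken[OF o]])
    apply (rule TransE[OF weaken[OF Ord_Trans[OF o]] weaken[OF y]]) by (rule Hyp_insert)
qed

lemma Trans_subst: "\<Gamma> \<turnstile> Eq x y \<Longrightarrow> \<Gamma> \<turnstile> Trans x \<Longrightarrow> \<Gamma> \<turnstile> Trans y"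
  using EqSubst[of \<Gamma> x y "Trans 0"] by simp

lemma Succ_Ord:
  assumes ok: "ikp_ctxt \<Gamma>" and S: "\<Gamma> \<turnstile> Succ s a" and oa: "\<Gamma> \<turnstile> Ord a"
  shows "\<Gamma> \<turnstile> Ord s"
proof (rule OrdI[OF ok])
  show "\<Gamma> \<turnstile> Trans s"
  proof (rule TransI[OF ok])
    fix y z let ?K = "insert (Mem z y) (insert (Mem y s) \<Gamma>)"
    have SK: "?K \<turnstile> Succ s a" by (rule deriv_mono[OF S]) blast
    have ys: "?K \<turnstile> Mem y s" by (rule Hyp) simp
    have "?K \<turnstile> Mem z a"
    proof (rule SuccE[OF SK ys])
      show "insert (Mem y a) ?K \<turnstile> Mem z a"
        by (rule TransE[OF deriv_mono[OF Ord_Trans[OF oa]] Hyp_insert]) (blast, rule Hyp, simp)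
      show "insert (Eq y a) ?K \<turnstile> Mem z a"
        by (rule Mem_subst_right[OF Hyp_insert]) (rule Hyp, simp)
    qed
    then show "?K \<turnstile> Mem z s" by (rule SuccI1[OF SK])
  qed
next
  fix y let ?K = "insert (Mem y s) \<Gamma>"
  show "?K \<turnstile> Trans y"
  proof (rule SuccE[OF weaken[OF S] Hyp_insert])
    show "insert (Mem y a) ?K \<turnstile> Trans y"
      by (rule Ord_elem_Trans[OF deriv_mono[OF oa] Hyp_insert]) blast
    show "insert (Eq y a) ?K \<turnstile> Trans y"
      by (rule Trans_subst[OF Eq_sym[OF Hyp_insert]]) (rule deriv_mono[OF Ord_Trans[OF oa]], blast)
  qed
qed

section \<open>Trichotomy of ordinals under restricted excluded middle\<close>

definition "REM = dB nREM"

lemma REM_unfold: "REM = All (All (Disj (Mem (Suc 0) 0) (Imp (Mem (Suc 0) 0) Fls)))"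
  by (simp add: REM_def unfold_defs)

lemma REM_E: "\<Gamma> \<turnstile> REM \<Longrightarrow> \<Gamma> \<turnstile> Disj (Mem x y) (Neg (Mem x y))"
  unfolding REM_unfold apply (drule AllE[where x=x]) apply (simp add: inst_def)
  apply (drule AllE[where x=y])
  by (simp add: inst_def Neg_def)

lemma REM_I:
  assumes ok: "ikp_ctxt \<Gamma>" and lem: "\<And>x y. \<Gamma> \<turnstile> Disj (Mem x y) (Neg (Mem x y))"
  shows "\<Gamma> \<turnstile> REM"
  unfolding REM_unfold
proof (rule AllI_inst[OF ok])
  fix x
  have "\<Gamma> \<turnstile> All (Disj (Mem (Suc x) 0) (Imp (Mem (Suc x) 0) Fls))"
    by (rule AllI_inst[OF ok]) (use lem in \<open>simp add: inst_def Neg_def\<close>)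
  then show "\<Gamma> \<turnstile> inst (All (Disj (Mem (Suc 0) 0) (Imp (Mem (Suc 0) 0) Fls))) x"
    by (simp add: inst_def)
qed

lemma dB_NConj: "dB (NConj A B) = Conj (dB A) (dB B)"
  by (simp add: dB_def)

definition "Trichot a b = Disj (Mem a b) (Disj (Eq a b) (Mem b a))"

lemma ren_Trichot[simp]: "ren f (Trichot a b) = Trichot (f a) (f b)"
  by (simp add: Trichot_def)

lemma TrichotI1: "\<Gamma> \<turnstile> Mem a b \<Longrightarrow> \<Gamma> \<turnstile> Trichot a b"
  unfolding Trichot_def by (rule DisjI1)
lemma TrichotI2: "\<Gamma> \<turnstile> Eq a b \<Longrightarrow> \<Gamma> \<turnstile> Trichot a b"
  unfolding Trichot_def by (rule DisjI2, rule DisjI1)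
lemma TrichotI3: "\<Gamma> \<turnstile> Mem b a \<Longrightarrow> \<Gamma> \<turnstile> Trichot a b"
  unfolding Trichot_def by (rule DisjI2, rule DisjI2)
lemma TrichotE:
  "\<Gamma> \<turnstile> Trichot a b \<Longrightarrow> insert (Mem a b) \<Gamma> \<turnstile> C \<Longrightarrow> insert (Eq a b) \<Gamma> \<turnstile> C \<Longrightarrow>
   insert (Mem b a) \<Gamma> \<turnstile> C \<Longrightarrow> \<Gamma> \<turnstile> C"
  unfolding Trichot_def
  apply (erule DisjE, assumption) apply (rule DisjE[OF Hyp_insert])
  apply (rule deriv_mono, assumption, blast) apply (rule deriv_mono, assumption, blast) done

text \<open>The induction hypotheses of the double set induction: the outer one on \<open>a\<close> (all
  ordinals in \<open>a\<close> are comparable with every ordinal), the inner one on \<open>b\<close> (\<open>a\<close> is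
  comparable with all ordinals in \<open>b\<close>).\<close>

abbreviation "trichot_all \<equiv> Imp (Ord 0) (All (Imp (Ord 0) (Trichot (Suc 0) 0)))"
abbreviation "trichot_with a \<equiv> Imp (Ord 0) (Trichot (Suc a) 0)"

text \<open>Extensionality reduces \<open>a = b\<close> to the two inclusions; each element \<open>z\<close> of one side
  is compared with the other side by induction hypothesis, and the two wrong outcomes put
  \<open>b \<in> a\<close> resp. \<open>a \<in> b\<close>, which excluded middle has already ruled out.\<close>

lemma Ord_trichot_step:
  assumes ok: "ikp_ctxt \<Gamma>" and rem: "\<Gamma> \<turnstile> REM" and oa: "\<Gamma> \<turnstile> Ord a" and ob: "\<Gamma> \<turnstile> Ord b"
    and IH_a: "\<Gamma> \<turnstile> BAll a trichot_all" and IH_b: "\<Gamma> \<turnstile> BAll b (trichot_with a)"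
  shows "\<Gamma> \<turnstile> Trichot a b"
proof (rule DisjE[OF REM_E[OF rem, of b a]])
  show "insert (Mem b a) \<Gamma> \<turnstile> Trichot a b" by (rule TrichotI3[OF Hyp_insert])
next
  let ?G2 = "insert (Neg (Mem b a)) \<Gamma>"
  have b_notin_a: "?G2 \<turnstile> Neg (Mem b a)" by (rule Hyp_insert)
  show "?G2 \<turnstile> Trichot a b"
  proof (rule DisjE[OF REM_E[OF weaken[OF rem], where x=a and y=b]])
    show "insert (Mem a b) ?G2 \<turnstile> Trichot a b" by (rule TrichotI1[OF Hyp_insert])
  next
    let ?G3 = "insert (Neg (Mem a b)) ?G2"
    have ok3: "ikp_ctxt ?G3" using ok by simp
    have a_notin_b: "?G3 \<turnstile> Neg (Mem a b)" by (rule Hyp_insert)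
    have "?G3 \<turnstile> Eq a b"
    proof (rule ExtI[OF ok3])
      fix z let ?H = "insert (Mem z a) ?G3"
      have za: "?H \<turnstile> Mem z a" by (rule Hyp_insert)
      have b_notin_a': "?H \<turnstile> Neg (Mem b a)" by (rule deriv_mono[OF b_notin_a]) blast
      have zo: "?H \<turnstile> Ord z" by (rule Ord_elem[OF _ deriv_mono[OF oa] za]) (use ok in simp, blast)
      have "?H \<turnstile> inst trichot_all z" by (rule BAllE[OF deriv_mono[OF IH_a] za]) blast
      then have "?H \<turnstile> All (Imp (Ord 0) (Trichot (Suc z) 0))" using zo by (simp add: inst_def ImpE)
      then have "?H \<turnstile> inst (Imp (Ord 0) (Trichot (Suc z) 0)) b" by (rule AllE)
      then have "?H \<turnstile> Imp (Ord b) (Trichot z b)" by (simp add: inst_def)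
      then have "?H \<turnstile> Trichot z b" by (rule ImpE) (rule deriv_mono[OF ob], blast)
      then show "?H \<turnstile> Mem z b"
      proof (rule TrichotE)
        show "insert (Mem z b) ?H \<turnstile> Mem z b" by (rule Hyp_insert)
        have "insert (Eq z b) ?H \<turnstile> Mem b a" by (rule Mem_subst_left[OF Hyp_insert weaken[OF za]])
        then show "insert (Eq z b) ?H \<turnstile> Mem z b" by (rule NegE[OF weaken[OF b_notin_a']])
        have "insert (Mem b z) ?H \<turnstile> Mem b a"
          by (rule TransE[OF deriv_mono[OF Ord_Trans[OF oa]] weaken[OF za] Hyp_insert]) blast
        then show "insert (Mem b z) ?H \<turnstile> Mem z b" by (rule NegE[OF weaken[OF b_notin_a']])
      qed
    next
      fix z let ?H = "insert (Mem z b) ?G3"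
      have zb: "?H \<turnstile> Mem z b" by (rule Hyp_insert)
      have a_notin_b': "?H \<turnstile> Neg (Mem a b)" by (rule weaken[OF a_notin_b])
      have zo: "?H \<turnstile> Ord z" by (rule Ord_elem[OF _ deriv_mono[OF ob] zb]) (use ok in simp, blast)
      have "?H \<turnstile> inst (trichot_with a) z" by (rule BAllE[OF deriv_mono[OF IH_b] zb]) blast
      then have "?H \<turnstile> Trichot a z" using zo by (simp add: inst_def ImpE)
      then show "?H \<turnstile> Mem z a"
      proof (rule TrichotE)
        have "insert (Mem a z) ?H \<turnstile> Mem a b"
          by (rule TransE[OF deriv_mono[OF Ord_Trans[OF ob]] weaken[OF zb] Hyp_insert]) blast
        then show "insert (Mem a z) ?H \<turnstile> Mem z a" by (rule NegE[OF weaken[OF a_notin_b']])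
        have "insert (Eq a z) ?H \<turnstile> Mem a b"
          by (rule Mem_subst_left[OF Eq_sym[OF Hyp_insert] weaken[OF zb]])
        then show "insert (Eq a z) ?H \<turnstile> Mem z a" by (rule NegE[OF weaken[OF a_notin_b']])
        show "insert (Mem z a) ?H \<turnstile> Mem z a" by (rule Hyp_insert)
      qed
    qed
    then show "?G3 \<turnstile> Trichot a b" by (rule TrichotI2)
  qed
qed

lemma Ord_trichot:
  assumes ok: "ikp_ctxt \<Gamma>" and rem: "\<Gamma> \<turnstile> REM" and oa: "\<Gamma> \<turnstile> Ord a" and ob: "\<Gamma> \<turnstile> Ord b"
  shows "\<Gamma> \<turnstile> Trichot a b"
proof -
  have "\<Gamma> \<turnstile> inst trichot_all a"
  proof (rule set_induct[OF ok])
    fix a' let ?G = "insert (Ord a') (insert (BAll a' trichot_all) \<Gamma>)"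
    have ok': "ikp_ctxt ?G" using ok by simp
    have "?G \<turnstile> All (trichot_with a')"
    proof (rule AllI_inst[OF ok'])
      fix x show "?G \<turnstile> inst (trichot_with a') x"
      proof (rule set_induct[OF ok'])
        fix b' let ?K = "insert (BAll b' (trichot_with a')) ?G"
        have "insert (Ord b') ?K \<turnstile> Trichot a' b'"
          by (rule Ord_trichot_step) (use ok in simp, (rule deriv_mono[OF rem], blast), (rule Hyp; simp)+)
        then show "?K \<turnstile> inst (trichot_with a') b'" by (simp add: inst_def ImpI)
      qed
    qed
    then show "insert (BAll a' trichot_all) \<Gamma> \<turnstile> inst trichot_all a'" by (simp add: inst_def ImpI)
  qed
  then have "\<Gamma> \<turnstile> All (trichot_with a)" using oa by (simp add: inst_def ImpE)
  then have "\<Gamma> \<turnstile> inst (trichot_with a) b" by (rule AllE)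
  then show ?thesis using ob by (simp add: inst_def ImpE)
qed

section \<open>The formula for the plump operator\<close>

text \<open>\<open>IsPl a y\<close> (the formula \<open>nPL\<close> of Defs) asserts a function \<open>F\<close> on a transitive
  domain \<open>D \<ni> a\<close> with \<open>F(a) = y\<close>; its conjuncts are named here: \<open>F\<close> is total on \<open>D\<close>,
  consists of pairs with first component in \<open>D\<close>, is single-valued, and satisfies the recursion
  \<open>F(b) = PlStep F b\<close>, where \<open>PlStep F b w\<close> says \<open>w = \<Union>g\<in>b. F(g)^pl+\<close>.\<close>

definition "PlTotal F D = BAll D (Ex (InPair (Suc 0) 0 (Suc (Suc F))))"

definition "PlGraph F D = BAll F (BEx (Suc D) (Ex (KPair (Suc (Suc 0)) (Suc 0) 0)))"
definition "PlSingleValued F = BAll F (BAll (Suc F) (All (All (All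
   (Imp (Conj (KPair (Suc (Suc (Suc (Suc 0)))) (Suc (Suc 0)) (Suc 0)) (KPair (Suc (Suc (Suc 0))) (Suc (Suc 0)) 0)) (Eq (Suc 0) 0))))))"
definition "PlRec F = BAll F (All (All (Imp (KPair (Suc (Suc 0)) (Suc 0) 0) (All (Iff (Mem 0 (Suc 0))
   (BEx (Suc (Suc 0)) (Ex (Conj (InPair (Suc 0) 0 (Suc (Suc (Suc (Suc (Suc (Suc F))))))) (Conj (Sub (Suc (Suc 0)) 0) (Relpl 0 (Suc (Suc 0))))))))))))"
lemma IsPl_unfold: "IsPl a y = Ex (Ex (Conj (Trans 0) (Conj (Mem (Suc (Suc a)) 0) (Conj (PlTotal (Suc 0) 0) (Conj (PlGraph (Suc 0) 0)
   (Conj (PlSingleValued (Suc 0)) (Conj (PlRec (Suc 0)) (InPair (Suc (Suc a)) (Suc (Suc y)) (Suc 0)))))))))"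
  by (simp add: unfold_defs PlTotal_def PlGraph_def PlSingleValued_def PlRec_def numeral_eq_Suc)
lemma Inj_unfold: "dB (nInj 0) = All (All (All (Imp (Conj (Ord (Suc (Suc 0))) (Conj (Ord (Suc 0)) (Conj (IsPl (Suc (Suc 0)) 0) (IsPl (Suc 0) 0)))) (Eq (Suc (Suc 0)) (Suc 0)))))"
  by (simp add: unfold_defs)
lemma PlUb_unfold: "dB (nPlUb 0) = All (Imp (PlOrd 0) (Ex (Conj (PlOrd 0) (Mem (Suc 0) 0))))"
  by (simp add: unfold_defs)

lemma ren_PlTotal[simp]: "ren f (PlTotal F D) = PlTotal (f F) (f D)" by (simp add: PlTotal_def)
lemma ren_PlGraph[simp]: "ren f (PlGraph F D) = PlGraph (f F) (f D)" by (simp add: PlGraph_def)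
lemma ren_PlSingleValued[simp]: "ren f (PlSingleValued F) = PlSingleValued (f F)"
  by (simp add: PlSingleValued_def)
lemma ren_PlRec[simp]: "ren f (PlRec F) = PlRec (f F)" by (simp add: PlRec_def)

lemma InjI:
  assumes ok: "ikp_ctxt \<Gamma>"
    and "\<And>a b y. insert (IsPl b y) (insert (IsPl a y) (insert (Ord b) (insert (Ord a) \<Gamma>))) \<turnstile> Eq a b"
  shows "\<Gamma> \<turnstile> dB (nInj 0)"
  unfolding Inj_unfold
  apply (rule AllI_inst[OF ok]) apply (simp add: inst_def)
  subgoal for a apply (rule AllI_inst[OF ok]) apply (simp add: inst_def)
  subgoal for b apply (rule AllI_inst[OF ok]) apply (simp add: inst_def)
  subgoal for y apply (rule ImpI) apply (rule ConjE_insert')+ by (rule assms(2))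
  done done done

lemma InjD: assumes I: "\<Gamma> \<turnstile> dB (nInj 0)" and "\<Gamma> \<turnstile> Ord a" "\<Gamma> \<turnstile> Ord b" "\<Gamma> \<turnstile> IsPl a y" "\<Gamma> \<turnstile> IsPl b y"
  shows "\<Gamma> \<turnstile> Eq a b"
proof -
  have "\<Gamma> \<turnstile> All (All (All (Imp (Conj (Ord (Suc (Suc 0))) (Conj (Ord (Suc 0)) (Conj (IsPl (Suc (Suc 0)) 0) (IsPl (Suc 0) 0)))) (Eq (Suc (Suc 0)) (Suc 0)))))"
    using I by (simp add: Inj_unfold)
  then have "\<Gamma> \<turnstile> inst (All (All (Imp (Conj (Ord (Suc (Suc 0))) (Conj (Ord (Suc 0)) (Conj (IsPl (Suc (Suc 0)) 0) (IsPl (Suc 0) 0)))) (Eq (Suc (Suc 0)) (Suc 0))))) a"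
    by (rule AllE)
  then have "\<Gamma> \<turnstile> All (All (Imp (Conj (Ord (Suc (Suc a))) (Conj (Ord (Suc 0)) (Conj (IsPl (Suc (Suc a)) 0) (IsPl (Suc 0) 0)))) (Eq (Suc (Suc a)) (Suc 0))))"
    by (simp add: inst_def)
  then have "\<Gamma> \<turnstile> inst (All (Imp (Conj (Ord (Suc (Suc a))) (Conj (Ord (Suc 0)) (Conj (IsPl (Suc (Suc a)) 0) (IsPl (Suc 0) 0)))) (Eq (Suc (Suc a)) (Suc 0)))) b"
    by (rule AllE)
  then have "\<Gamma> \<turnstile> All (Imp (Conj (Ord (Suc a)) (Conj (Ord (Suc b)) (Conj (IsPl (Suc a) 0) (IsPl (Suc b) 0)))) (Eq (Suc a) (Suc b)))"
    by (simp add: inst_def)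
  then have "\<Gamma> \<turnstile> inst (Imp (Conj (Ord (Suc a)) (Conj (Ord (Suc b)) (Conj (IsPl (Suc a) 0) (IsPl (Suc b) 0)))) (Eq (Suc a) (Suc b))) y"
    by (rule AllE)
  then have "\<Gamma> \<turnstile> Imp (Conj (Ord a) (Conj (Ord b) (Conj (IsPl a y) (IsPl b y)))) (Eq a b)"
    by (simp add: inst_def)
  then show ?thesis by (rule ImpE) (intro ConjI assms(2-5))
qed

lemma PlUbE: assumes ok: "ikp_ctxt \<Gamma>" and P: "\<Gamma> \<turnstile> dB (nPlUb 0)" and w: "\<Gamma> \<turnstile> PlOrd w"
  and c: "\<And>\<beta>. insert (PlOrd \<beta>) (insert (Mem w \<beta>) \<Gamma>) \<turnstile> C" shows "\<Gamma> \<turnstile> C"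
proof -
  have "\<Gamma> \<turnstile> All (Imp (PlOrd 0) (Ex (Conj (PlOrd 0) (Mem (Suc 0) 0))))" using P
    by (simp add: PlUb_unfold)
  then have "\<Gamma> \<turnstile> inst (Imp (PlOrd 0) (Ex (Conj (PlOrd 0) (Mem (Suc 0) 0)))) w" by (rule AllE)
  then have "\<Gamma> \<turnstile> Imp (PlOrd w) (Ex (Conj (PlOrd 0) (Mem (Suc w) 0)))" by (simp add: inst_def)
  then have "\<Gamma> \<turnstile> Ex (Conj (PlOrd 0) (Mem (Suc w) 0))" using w by (rule ImpE)
  then show ?thesis
    apply (rule ExE_inst[OF _ ok]) apply (simp add: inst_def) apply (rule ConjE_insert) by (rule c)
qed

lemma IsPlE: assumes pl: "\<Gamma> \<turnstile> IsPl a y" and ok: "ikp_ctxt \<Gamma>"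
  and c: "\<And>F D. insert (Trans D) (insert (Mem a D) (insert (PlTotal F D) (insert (PlGraph F D) (insert (PlSingleValued F) (insert (PlRec F) (insert (InPair a y F) \<Gamma>)))))) \<turnstile> C"
  shows "\<Gamma> \<turnstile> C"
  using pl unfolding IsPl_unfold
  apply (rule ExE_inst[OF _ ok]) apply (simp add: inst_def)
  subgoal for F
  apply (rule ExE_inst) apply (rule Hyp_insert) using ok apply simp apply (simp add: inst_def)
  subgoal for D
    apply (rule ConjE_insert')+ apply (rule deriv_mono[OF c[where F=F and D=D]]) by blast
  done done

lemma IsPlI: "\<Gamma> \<turnstile> Trans D \<Longrightarrow> \<Gamma> \<turnstile> Mem a D \<Longrightarrow> \<Gamma> \<turnstile> PlTotal F D \<Longrightarrow> \<Gamma> \<turnstile> PlGraph F D \<Longrightarrow> \<Gamma> \<turnstile> PlSingleValued F \<Longrightarrow>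
  \<Gamma> \<turnstile> PlRec F \<Longrightarrow> \<Gamma> \<turnstile> InPair a y F \<Longrightarrow> \<Gamma> \<turnstile> IsPl a y"
  unfolding IsPl_unfold apply (rule ExI[where x=F]) apply (simp add: inst_def)
  apply (rule ExI[where x=D])
  by (simp add: inst_def ConjI)

lemma PlTotalE: "\<Gamma> \<turnstile> PlTotal F D \<Longrightarrow> \<Gamma> \<turnstile> Mem b D \<Longrightarrow> ikp_ctxt \<Gamma> \<Longrightarrow> (\<And>z. insert (InPair b z F) \<Gamma> \<turnstile> C) \<Longrightarrow>
    \<Gamma> \<turnstile> C"
  unfolding PlTotal_def apply (drule BAllE, assumption) apply (simp add: inst_def)
  apply (erule ExE_inst, assumption) by (simp add: inst_def)
lemma PlTotalI: "ikp_ctxt \<Gamma> \<Longrightarrow> (\<And>b. insert (Mem b D) \<Gamma> \<turnstile> Ex (InPair (Suc b) 0 (Suc F))) \<Longrightarrow>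
    \<Gamma> \<turnstile> PlTotal F D"
  unfolding PlTotal_def apply (rule BAllI, assumption) by (simp add: inst_def)
lemma PlTotal_witness: "\<Gamma> \<turnstile> InPair b z F \<Longrightarrow> \<Gamma> \<turnstile> Ex (InPair (Suc b) 0 (Suc F))"
  by (rule ExI[where x=z]) (simp add: inst_def)

lemma PlGraphI: "ikp_ctxt \<Gamma> \<Longrightarrow>
    (\<And>p. insert (Mem p F) \<Gamma> \<turnstile> BEx D (Ex (KPair (Suc (Suc p)) (Suc 0) 0))) \<Longrightarrow> \<Gamma> \<turnstile> PlGraph F D"
  unfolding PlGraph_def apply (rule BAllI, assumption) by (simp add: inst_def)
lemma PlGraph_witness: "\<Gamma> \<turnstile> Mem b D \<Longrightarrow> \<Gamma> \<turnstile> KPair p b z \<Longrightarrow>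
    \<Gamma> \<turnstile> BEx D (Ex (KPair (Suc (Suc p)) (Suc 0) 0))"
  apply (rule BExI[where z=b], assumption) apply (simp add: inst_def) apply (rule ExI[where x=z])
    by (simp add: inst_def)

lemma PlSingleValuedI: "ikp_ctxt \<Gamma> \<Longrightarrow>
    (\<And>p q b v v'. insert (KPair p b v) (insert (KPair q b v') (insert (Mem q F) (insert (Mem p F) \<Gamma>))) \<turnstile> Eq v v') \<Longrightarrow> \<Gamma> \<turnstile> PlSingleValued F"
  unfolding PlSingleValued_def apply (rule BAllI, assumption) apply (simp add: inst_def)
  apply (rule BAllI) apply simp apply (simp add: inst_def)
  apply (rule AllI_inst) apply simp apply (simp add: inst_def)
  apply (rule AllI_inst) apply simp apply (simp add: inst_def)
  apply (rule AllI_inst) apply simp apply (simp add: inst_def)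
  apply (rule ImpI) apply (rule ConjE_insert) by simp

definition "PlStep F b w = Compr w (BEx (Suc b) (Ex (Conj (InPair (Suc 0) 0 (Suc (Suc (Suc F)))) (Conj (Sub (Suc (Suc 0)) 0) (Relpl 0 (Suc (Suc 0)))))))"
definition "PlStepMem F b x = BEx b (Ex (Conj (InPair (Suc 0) 0 (Suc (Suc F))) (Conj (Sub (Suc (Suc x)) 0) (Relpl 0 (Suc (Suc x))))))"

lemma PlRecD: "\<Gamma> \<turnstile> PlRec F \<Longrightarrow> \<Gamma> \<turnstile> Mem p F \<Longrightarrow> \<Gamma> \<turnstile> KPair p b w \<Longrightarrow> \<Gamma> \<turnstile> PlStep F b w"
  unfolding PlRec_def apply (drule BAllE, assumption) apply (simp add: inst_def)
  apply (drule AllE[where x=b]) apply (simp add: inst_def)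
  apply (drule AllE[where x=w]) apply (simp add: inst_def)
  apply (drule ImpE, assumption) by (simp add: PlStep_def)
lemma PlRecI: "ikp_ctxt \<Gamma> \<Longrightarrow> (\<And>p b w. insert (KPair p b w) (insert (Mem p F) \<Gamma>) \<turnstile> PlStep F b w) \<Longrightarrow>
    \<Gamma> \<turnstile> PlRec F"
  unfolding PlRec_def apply (rule BAllI, assumption) apply (simp add: inst_def)
  apply (rule AllI_inst) apply simp apply (simp add: inst_def)
  apply (rule AllI_inst) apply simp apply (simp add: inst_def)
  apply (rule ImpI) by (simp add: PlStep_def)

lemma PlStepE: assumes "\<Gamma> \<turnstile> PlStep F b w" "\<Gamma> \<turnstile> Mem x w" "ikp_ctxt \<Gamma>"
  "\<And>g v. insert (Mem g b) (insert (InPair g v F) (insert (Sub x v) (insert (Relpl v x) \<Gamma>))) \<turnstile> C"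
  shows "\<Gamma> \<turnstile> C"
  using Compr_memD[OF assms(1)[unfolded PlStep_def] assms(2)]
  apply (simp add: inst_def)
  apply (erule BExE) apply (rule assms(3)) apply (simp add: inst_def)
  subgoal for g
  apply (rule ExE_inst[OF weaken[OF Hyp_insert]]) using assms(3) apply simp
  apply (simp add: inst_def)
  subgoal for v apply (rule ConjE_insert') apply (rule ConjE_insert)
  apply (rule deriv_mono[OF assms(4)]) by blast
  done done

lemma PlStep_memI: "\<Gamma> \<turnstile> PlStep F b w \<Longrightarrow> \<Gamma> \<turnstile> Mem g b \<Longrightarrow> \<Gamma> \<turnstile> InPair g v F \<Longrightarrow> \<Gamma> \<turnstile> Sub x v \<Longrightarrow>
    \<Gamma> \<turnstile> Relpl v x \<Longrightarrow> \<Gamma> \<turnstile> Mem x w"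
  unfolding PlStep_def apply (rule Compr_memI, assumption) apply (simp add: inst_def)
  apply (rule BExI[where z=g], assumption) apply (simp add: inst_def) apply (rule ExI[where x=v])
  by (simp add: inst_def ConjI)
lemma PlStepMemI: "\<Gamma> \<turnstile> Mem g b \<Longrightarrow> \<Gamma> \<turnstile> InPair g v F \<Longrightarrow> \<Gamma> \<turnstile> Sub x v \<Longrightarrow> \<Gamma> \<turnstile> Relpl v x \<Longrightarrow>
    \<Gamma> \<turnstile> PlStepMem F b x"
  unfolding PlStepMem_def
  apply (rule BExI[where z=g], assumption) apply (simp add: inst_def) apply (rule ExI[where x=v])
  by (simp add: inst_def ConjI)
lemma PlStepI: "ikp_ctxt \<Gamma> \<Longrightarrow>
    (\<And>x g v. insert (Mem g b) (insert (InPair g v F) (insert (Sub x v) (insert (Relpl v x) \<Gamma>))) \<turnstile> Mem x w)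
  \<Longrightarrow> (\<And>x. insert (Mem x w) \<Gamma> \<turnstile> PlStepMem F b x) \<Longrightarrow> \<Gamma> \<turnstile> PlStep F b w"
  unfolding PlStep_def apply (rule ComprI) apply assumption
  subgoal for x apply (simp add: inst_def) by (simp add: PlStepMem_def)
  subgoal for x apply (simp add: inst_def)
    apply (rule BExE[OF Hyp_insert]) apply simp apply (simp add: inst_def)
    subgoal for g apply (rule ExE_inst[OF weaken[OF Hyp_insert]]) apply simp
    apply (simp add: inst_def)
      subgoal for v apply (rule ConjE_insert') apply (rule ConjE_insert) apply (rule deriv_mono)
      apply assumption by blast
      done
    done
  done

section \<open>Restricted excluded middle implies PlUb and injectivity\<close>

lemma Relpl_Ord: assumes ok: "ikp_ctxt \<Gamma>" and oA: "\<Gamma> \<turnstile> Ord A" and s: "\<Gamma> \<turnstile> Sub x A"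
    and r: "\<Gamma> \<turnstile> Relpl A x"
  shows "\<Gamma> \<turnstile> Ord x"
proof (rule OrdI[OF ok])
  show "\<Gamma> \<turnstile> Trans x"
  proof (rule TransI[OF ok])
    fix y z let ?H = "insert (Mem z y) (insert (Mem y x) \<Gamma>)"
    have okH: "ikp_ctxt ?H" using ok by simp
    have yA: "?H \<turnstile> Mem y A" by (rule SubE[OF deriv_mono[OF s]]) (blast, rule Hyp, simp)
    have zA: "?H \<turnstile> Mem z A" by (rule TransE[OF deriv_mono[OF Ord_Trans[OF oA]] yA Hyp_insert]) blast
    have ty: "?H \<turnstile> Trans y" by (rule Ord_elem_Trans[OF deriv_mono[OF oA] yA]) blast
    have sz: "?H \<turnstile> Sub z y"
      by (rule SubI[OF okH]) (rule TransE[OF weaken[OF ty] weaken[OF Hyp_insert] Hyp_insert])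
    have yx: "?H \<turnstile> Mem y x" by (rule Hyp) simp
    show "?H \<turnstile> Mem z x" by (rule RelplE[OF deriv_mono[OF r] yx zA sz]) blast
  qed
next
  fix y show "insert (Mem y x) \<Gamma> \<turnstile> Trans y"
    by (rule Ord_elem_Trans[OF weaken[OF oA]]) (rule SubE[OF weaken[OF s] Hyp_insert])
qed

text \<open>A relatively plump \<open>g \<subseteq> b\<close> is again an ordinal, so trichotomy and foundation leave
  only \<open>g \<in> b\<close> or \<open>g = b\<close>.\<close>

lemma plump_cases: assumes ok: "ikp_ctxt \<Gamma>" and rem: "\<Gamma> \<turnstile> REM" and oA: "\<Gamma> \<turnstile> Ord A"
    and bA: "\<Gamma> \<turnstile> Mem b A"
  and gb: "\<Gamma> \<turnstile> Sub g b" and r: "\<Gamma> \<turnstile> Relpl A g"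
  shows "\<Gamma> \<turnstile> Disj (Mem g b) (Eq g b)"
proof -
  have ob: "\<Gamma> \<turnstile> Ord b" by (rule Ord_elem[OF ok oA bA])
  have gA: "\<Gamma> \<turnstile> Sub g A"
    by (rule SubI[OF ok]) (rule TransE[OF weaken[OF Ord_Trans[OF oA]] weaken[OF bA] SubE[OF weaken[OF gb] Hyp_insert]])
  have og: "\<Gamma> \<turnstile> Ord g" by (rule Relpl_Ord[OF ok oA gA r])
  show ?thesis
    apply (rule TrichotE[OF Ord_trichot[OF ok rem og ob]])
    apply (rule DisjI1[OF Hyp_insert]) apply (rule DisjI2[OF Hyp_insert])
    apply (rule NegE[OF not_Mem_self[of _ b]]) using ok apply simp
    by (rule SubE[OF weaken[OF gb] Hyp_insert])
qed

lemma REM_Ord_PlOrd: assumes ok: "ikp_ctxt \<Gamma>" and rem: "\<Gamma> \<turnstile> REM" and oA: "\<Gamma> \<turnstile> Ord A"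
  shows "\<Gamma> \<turnstile> PlOrd A"
proof (rule PlOrdI[OF ok oA])
  fix b g let ?H = "insert (Relpl A g) (insert (Sub g b) (insert (Mem b A) \<Gamma>))"
  have okH: "ikp_ctxt ?H" using ok by simp
  have c: "?H \<turnstile> Disj (Mem g b) (Eq g b)"
    by (rule plump_cases[OF okH deriv_mono[OF rem] deriv_mono[OF oA]]) (blast, blast, (rule Hyp, simp)+)
  show "?H \<turnstile> Mem g A"
    apply (rule DisjE[OF c])
    apply (rule TransE[OF deriv_mono[OF Ord_Trans[OF oA]], where y=b]) apply blast
    apply (rule Hyp, simp) apply (rule Hyp_insert)
    apply (rule Mem_subst_left_sym[OF Hyp_insert]) by (rule Hyp, simp)
next
  fix b g d let ?H = "insert (Mem b d) (insert (Mem d A) (insert (Relpl A g) (insert (Sub g b) (insert (Mem b A) \<Gamma>))))"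
  have okH: "ikp_ctxt ?H" using ok by simp
  have c: "?H \<turnstile> Disj (Mem g b) (Eq g b)"
    by (rule plump_cases[OF okH deriv_mono[OF rem] deriv_mono[OF oA]]) (blast, blast, (rule Hyp, simp)+)
  have td: "?H \<turnstile> Trans d" by (rule Ord_elem_Trans[OF deriv_mono[OF oA]]) (blast, rule Hyp, simp)
  show "?H \<turnstile> Mem g d"
    apply (rule DisjE[OF c])
    apply (rule TransE[OF weaken[OF td], where y=b]) apply (rule Hyp, simp) apply (rule Hyp_insert)
    apply (rule Mem_subst_left_sym[OF Hyp_insert]) by (rule Hyp, simp)
qed

lemma REM_PlUb:
  assumes ok: "ikp_ctxt \<Gamma>" and rem: "\<Gamma> \<turnstile> REM"
  shows "\<Gamma> \<turnstile> dB (nPlUb 0)"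
  unfolding PlUb_unfold
proof (rule AllI_inst[OF ok])
  fix a
  let ?G = "insert (PlOrd a) \<Gamma>"
  have "?G \<turnstile> Ex (Conj (PlOrd 0) (Mem (Suc a) 0))"
  proof (rule ex_Succ[of _ a])
    show "ikp_ctxt ?G" using ok by simp
    fix s let ?H = "insert (Succ s a) ?G"
    have okH: "ikp_ctxt ?H" using ok by simp
    have S: "?H \<turnstile> Succ s a" by (rule Hyp_insert)
    have "?H \<turnstile> Ord s" by (rule Succ_Ord[OF okH S PlOrd_Ord[OF weaken[OF Hyp_insert]]])
    then have ps: "?H \<turnstile> PlOrd s" by (rule REM_Ord_PlOrd[OF okH deriv_mono[OF rem], rotated]) blast
    have as: "?H \<turnstile> Mem a s" by (rule SuccI2[OF S EqRefl])
    show "?H \<turnstile> Ex (Conj (PlOrd 0) (Mem (Suc a) 0))"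
      by (rule ExI[where x=s]) (simp add: inst_def ConjI[OF ps as])
  qed
  then show "\<Gamma> \<turnstile> inst (Imp (PlOrd 0) (Ex (Conj (PlOrd 0) (Mem (Suc 0) 0)))) a"
    by (simp add: inst_def ImpI)
qed

text \<open>Induction formula for \<open>a^pl = a\<close>, relative to an approximation \<open>F\<close> with domain \<open>D\<close>:
  every ordinal \<open>b \<in> D\<close> has \<open>F(b) = b\<close>.\<close>

abbreviation "pl_id_fm F D \<equiv> Imp (Mem 0 (Suc D)) (Imp (Ord 0) (All (Imp (InPair (Suc 0) 0 (Suc (Suc F))) (Eq 0 (Suc 0)))))"

lemma pl_id_IH: assumes IH: "\<Gamma> \<turnstile> BAll b (pl_id_fm F D)" and "\<Gamma> \<turnstile> Mem g b" "\<Gamma> \<turnstile> Mem g D"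
  "\<Gamma> \<turnstile> Ord g" "\<Gamma> \<turnstile> InPair g v F" shows "\<Gamma> \<turnstile> Eq v g"
proof -
  have "\<Gamma> \<turnstile> inst (pl_id_fm F D) g" by (rule BAllE[OF IH assms(2)])
  then have "\<Gamma> \<turnstile> Imp (Mem g D) (Imp (Ord g) (All (Imp (InPair (Suc g) 0 (Suc F)) (Eq 0 (Suc g)))))"
    by (simp add: inst_def)
  then have "\<Gamma> \<turnstile> All (Imp (InPair (Suc g) 0 (Suc F)) (Eq 0 (Suc g)))" using assms(3,4)
    by (meson ImpE)
  then have "\<Gamma> \<turnstile> inst (Imp (InPair (Suc g) 0 (Suc F)) (Eq 0 (Suc g))) v" by (rule AllE)
  then have "\<Gamma> \<turnstile> Imp (InPair g v F) (Eq v g)" by (simp add: inst_def)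
  then show ?thesis using assms(5) by (rule ImpE)
qed

lemma IsPl_id_step: assumes ok: "ikp_ctxt \<Gamma>" and rem: "\<Gamma> \<turnstile> REM" and tD: "\<Gamma> \<turnstile> Trans D"
    and tot: "\<Gamma> \<turnstile> PlTotal F D"
  and rec: "\<Gamma> \<turnstile> PlRec F" and IH: "\<Gamma> \<turnstile> BAll b (pl_id_fm F D)" and bD: "\<Gamma> \<turnstile> Mem b D"
  and ob: "\<Gamma> \<turnstile> Ord b" and bw: "\<Gamma> \<turnstile> InPair b w F"
  shows "\<Gamma> \<turnstile> Eq w b"
proof (rule InPairE[OF bw ok])
  fix p let ?G = "insert (Mem p F) (insert (KPair p b w) \<Gamma>)"
  have okG: "ikp_ctxt ?G" using ok by simp
  have ch: "?G \<turnstile> PlStep F b w"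
    by (rule PlRecD[OF deriv_mono[OF rec], where p=p]) (blast, (rule Hyp, simp)+)
  show "?G \<turnstile> Eq w b"
  proof (rule ExtI[OF okG])
    fix x let ?H = "insert (Mem x w) ?G"
    have okH: "ikp_ctxt ?H" using ok by simp
    show "?H \<turnstile> Mem x b"
    proof (rule PlStepE[OF deriv_mono[OF ch] Hyp_insert okH])
      show "?G \<subseteq> ?H" by blast
      fix g v let ?K = "insert (Mem g b) (insert (InPair g v F) (insert (Sub x v) (insert (Relpl v x) ?H)))"
      have okK: "ikp_ctxt ?K" using ok by simp
      have gb: "?K \<turnstile> Mem g b" by (rule Hyp_insert)
      have gD: "?K \<turnstile> Mem g D" by (rule TransE[OF deriv_mono[OF tD] deriv_mono[OF bD] gb]) blast+
      have og: "?K \<turnstile> Ord g" by (rule Ord_elem[OF okK deriv_mono[OF ob] gb]) blast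
      have vg: "?K \<turnstile> Eq v g"
        by (rule pl_id_IH[OF deriv_mono[OF IH] gb gD og]) (blast, rule Hyp, simp)
      have sxg: "?K \<turnstile> Sub x g" by (rule Sub_subst_right[OF vg]) (rule Hyp, simp)
      have rgx: "?K \<turnstile> Relpl g x" by (rule Relpl_subst_left[OF vg]) (rule Hyp, simp)
      have ox: "?K \<turnstile> Ord x" by (rule Relpl_Ord[OF okK og sxg rgx])
      show "?K \<turnstile> Mem x b"
        apply (rule TrichotE[OF Ord_trichot[OF okK deriv_mono[OF rem] ox og]]) apply blast
        apply (rule TransE[OF deriv_mono[OF Ord_Trans[OF ob]] weaken[OF gb] Hyp_insert]) apply blast
        apply (rule Mem_subst_left_sym[OF Hyp_insert weaken[OF gb]])
        apply (rule NegE[OF not_Mem_self[of _ g]]) using ok apply simp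
        by (rule SubE[OF weaken[OF sxg] Hyp_insert])
    qed
  next
    fix x let ?H = "insert (Mem x b) ?G"
    have okH: "ikp_ctxt ?H" using ok by simp
    have xb: "?H \<turnstile> Mem x b" by (rule Hyp_insert)
    have xD: "?H \<turnstile> Mem x D" by (rule TransE[OF deriv_mono[OF tD] deriv_mono[OF bD] xb]) blast+
    have ox: "?H \<turnstile> Ord x" by (rule Ord_elem[OF okH deriv_mono[OF ob] xb]) blast
    show "?H \<turnstile> Mem x w"
    proof (rule PlTotalE[OF deriv_mono[OF tot] xD okH])
      show "\<Gamma> \<subseteq> ?H" by blast
      fix z let ?K = "insert (InPair x z F) ?H"
      have okK: "ikp_ctxt ?K" using ok by simp
      have zx: "?K \<turnstile> Eq z x"
        by (rule pl_id_IH[OF deriv_mono[OF IH] weaken[OF xb] weaken[OF xD] weaken[OF ox] Hyp_insert]) blast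
      have xz: "?K \<turnstile> Eq x z" by (rule Eq_sym[OF zx])
      show "?K \<turnstile> Mem x w"
        apply (rule PlStep_memI[OF deriv_mono[OF ch] weaken[OF xb] Hyp_insert]) apply blast
        apply (rule Sub_subst_right[OF xz Sub_refl[OF okK]])
        by (rule Relpl_subst_left[OF xz Relpl_refl[OF okK]])
    qed
  qed
qed

lemma REM_IsPl_id: assumes ok: "ikp_ctxt \<Gamma>" and rem: "\<Gamma> \<turnstile> REM" and oa: "\<Gamma> \<turnstile> Ord a"
    and pl: "\<Gamma> \<turnstile> IsPl a y"
  shows "\<Gamma> \<turnstile> Eq y a"
proof (rule IsPlE[OF pl ok])
  fix F D
  let ?G = "insert (Trans D) (insert (Mem a D) (insert (PlTotal F D) (insert (PlGraph F D) (insert (PlSingleValued F) (insert (PlRec F) (insert (InPair a y F) \<Gamma>))))))"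
  have okG: "ikp_ctxt ?G" using ok by simp
  have ind: "?G \<turnstile> inst (pl_id_fm F D) x" for x
  proof (rule set_induct[OF okG])
    fix b let ?H = "insert (BAll b (pl_id_fm F D)) ?G"
    let ?K = "insert (Ord b) (insert (Mem b D) ?H)"
    have "?K \<turnstile> All (Imp (InPair (Suc b) 0 (Suc F)) (Eq 0 (Suc b)))"
    proof (rule AllI_inst)
      show "ikp_ctxt ?K" using ok by simp
      fix w
      have "insert (InPair b w F) ?K \<turnstile> Eq w b"
        apply (rule IsPl_id_step[where F=F and D=D]) using ok apply simp
        apply (rule deriv_mono[OF rem], blast)
        by (rule Hyp, simp)+
      then show "?K \<turnstile> inst (Imp (InPair (Suc b) 0 (Suc F)) (Eq 0 (Suc b))) w"
        by (simp add: inst_def ImpI)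
    qed
    then show "?H \<turnstile> inst (pl_id_fm F D) b" by (simp add: inst_def ImpI)
  qed
  have "?G \<turnstile> Imp (Mem a D) (Imp (Ord a) (All (Imp (InPair (Suc a) 0 (Suc F)) (Eq 0 (Suc a)))))"
    using ind[of a] by (simp add: inst_def)
  moreover have "?G \<turnstile> Mem a D" by (rule Hyp) simp
  ultimately have "?G \<turnstile> Imp (Ord a) (All (Imp (InPair (Suc a) 0 (Suc F)) (Eq 0 (Suc a))))"
    by (rule ImpE)
  moreover have "?G \<turnstile> Ord a" by (rule deriv_mono[OF oa]) blast
  ultimately have "?G \<turnstile> All (Imp (InPair (Suc a) 0 (Suc F)) (Eq 0 (Suc a)))" by (rule ImpE)
  then have "?G \<turnstile> inst (Imp (InPair (Suc a) 0 (Suc F)) (Eq 0 (Suc a))) y" by (rule AllE)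
  then have "?G \<turnstile> Imp (InPair a y F) (Eq y a)" by (simp add: inst_def)
  then show "?G \<turnstile> Eq y a" by (rule ImpE) (rule Hyp, simp)
qed

lemma REM_Inj:
  assumes ok: "ikp_ctxt \<Gamma>" and rem: "\<Gamma> \<turnstile> REM"
  shows "\<Gamma> \<turnstile> dB (nInj 0)"
proof (rule InjI[OF ok])
  fix a b y
  let ?G = "insert (IsPl b y) (insert (IsPl a y) (insert (Ord b) (insert (Ord a) \<Gamma>)))"
  have okG: "ikp_ctxt ?G" using ok by simp
  have "?G \<turnstile> Eq y a" by (rule REM_IsPl_id[OF okG deriv_mono[OF rem]]) (blast, (rule Hyp, simp)+)
  moreover have "?G \<turnstile> Eq y b"
    by (rule REM_IsPl_id[OF okG deriv_mono[OF rem]]) (blast, (rule Hyp, simp)+)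
  ultimately show "?G \<turnstile> Eq a b" by (meson Eq_sym Eq_trans)
qed

section \<open>Plump values read off a graph\<close>

text \<open>\<open>PlUnion u Y\<close> says \<open>Y = \<Union>g\<in>u. g^pl+\<close>; thus \<open>PlUnion g g\<close> makes \<open>g\<close> a fixed point
  of the recursion for the identity function.\<close>

definition "PlUnion u Y = Compr Y (BEx (Suc u) (Conj (Sub (Suc 0) 0) (Relpl 0 (Suc 0))))"

definition "PlUnionMem u x = BEx u (Conj (Sub (Suc x) 0) (Relpl 0 (Suc x)))"
lemma ren_PlUnion[simp]: "ren f (PlUnion u Y) = PlUnion (f u) (f Y)" by (simp add: PlUnion_def)
lemma ren_PlStep[simp]: "ren f (PlStep F b w) = PlStep (f F) (f b) (f w)" by (simp add: PlStep_def)
lemma PlUnionE: assumes "\<Gamma> \<turnstile> PlUnion u Y" "\<Gamma> \<turnstile> Mem x Y" "ikp_ctxt \<Gamma>"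
  "\<And>g. insert (Mem g u) (insert (Sub x g) (insert (Relpl g x) \<Gamma>)) \<turnstile> C" shows "\<Gamma> \<turnstile> C"
  using Compr_memD[OF assms(1)[unfolded PlUnion_def] assms(2)]
  apply (simp add: inst_def)
  apply (erule BExE) apply (rule assms(3)) apply (simp add: inst_def)
  subgoal for g apply (rule ConjE_insert2) apply (rule deriv_mono[OF assms(4)]) by blast
  done
lemma PlUnion_memI: "\<Gamma> \<turnstile> PlUnion u Y \<Longrightarrow> \<Gamma> \<turnstile> Mem g u \<Longrightarrow> \<Gamma> \<turnstile> Sub x g \<Longrightarrow> \<Gamma> \<turnstile> Relpl g x \<Longrightarrow> \<Gamma> \<turnstile> Mem x Y"
  unfolding PlUnion_def apply (rule Compr_memI, assumption) apply (simp add: inst_def)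
  apply (rule BExI[where z=g], assumption) by (simp add: inst_def ConjI)
lemma PlUnionMemI: "\<Gamma> \<turnstile> Mem g u \<Longrightarrow> \<Gamma> \<turnstile> Sub x g \<Longrightarrow> \<Gamma> \<turnstile> Relpl g x \<Longrightarrow> \<Gamma> \<turnstile> PlUnionMem u x"
  unfolding PlUnionMem_def apply (rule BExI[where z=g], assumption) by (simp add: inst_def ConjI)
lemma PlUnionI: "ikp_ctxt \<Gamma> \<Longrightarrow> (\<And>x. insert (Mem x Y) \<Gamma> \<turnstile> PlUnionMem u x) \<Longrightarrow>
  (\<And>x g. insert (Mem g u) (insert (Sub x g) (insert (Relpl g x) \<Gamma>)) \<turnstile> Mem x Y) \<Longrightarrow> \<Gamma> \<turnstile> PlUnion u Y"
  unfolding PlUnion_def apply (rule ComprI) apply assumption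
  subgoal for x apply (simp add: inst_def) by (simp add: PlUnionMem_def)
  subgoal for x apply (simp add: inst_def)
    apply (rule BExE[OF Hyp_insert]) apply simp apply (simp add: inst_def)
    subgoal for g apply (rule ConjE_insert2) apply (rule deriv_mono) apply assumption by blast
    done
  done

lemma KPair_subst: "\<Gamma> \<turnstile> Eq p q \<Longrightarrow> \<Gamma> \<turnstile> KPair p a b \<Longrightarrow> \<Gamma> \<turnstile> KPair q a b"
  using EqSubst[of \<Gamma> p q "KPair 0 (Suc a) (Suc b)"] by (simp add: inst_def)
lemma InPair_subst: "\<Gamma> \<turnstile> Eq a c \<Longrightarrow> \<Gamma> \<turnstile> InPair a b F \<Longrightarrow> \<Gamma> \<turnstile> InPair c b F"
  using EqSubst[of \<Gamma> a c "InPair 0 (Suc b) (Suc F)"] by (simp add: inst_def)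
lemma InPair_diag_subst: "\<Gamma> \<turnstile> Eq a c \<Longrightarrow> \<Gamma> \<turnstile> InPair a a F \<Longrightarrow> \<Gamma> \<turnstile> InPair c c F"
  using EqSubst[of \<Gamma> a c "InPair 0 0 (Suc F)"] by (simp add: inst_def)
lemma PlUnion_diag_subst: "\<Gamma> \<turnstile> Eq a c \<Longrightarrow> \<Gamma> \<turnstile> PlUnion a a \<Longrightarrow> \<Gamma> \<turnstile> PlUnion c c"
  using EqSubst[of \<Gamma> a c "PlUnion 0 0"] by (simp add: inst_def)
lemma PlStep_subst2: "\<Gamma> \<turnstile> Eq b c \<Longrightarrow> \<Gamma> \<turnstile> PlStep F b w \<Longrightarrow> \<Gamma> \<turnstile> PlStep F c w"
  using EqSubst[of \<Gamma> b c "PlStep (Suc F) 0 (Suc w)"] by (simp add: inst_def)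
lemma PlStep_subst3: "\<Gamma> \<turnstile> Eq w c \<Longrightarrow> \<Gamma> \<turnstile> PlStep F b w \<Longrightarrow> \<Gamma> \<turnstile> PlStep F b c"
  using EqSubst[of \<Gamma> w c "PlStep (Suc F) (Suc b) 0"] by (simp add: inst_def)

lemma Mem_Eq_contr: "ikp_ctxt \<Delta> \<Longrightarrow> \<Delta> \<turnstile> Mem u A \<Longrightarrow> \<Delta> \<turnstile> Eq u A \<Longrightarrow> \<Delta> \<turnstile> C"
  apply (rule NegE[OF not_Mem_self[of _ A]], assumption) by (rule Mem_subst_left)

lemma graph_diag_case: assumes ok: "ikp_ctxt \<Delta>"
    and "\<Delta> \<turnstile> Eq p q" "\<Delta> \<turnstile> KPair q t t" "\<Delta> \<turnstile> Mem t A" "\<Delta> \<turnstile> KPair p u v"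
  shows "\<Delta> \<turnstile> Disj (Conj (Mem u A) (Eq v u)) (Conj (Eq u A) (Eq v Y))"
proof -
  have pt: "\<Delta> \<turnstile> KPair p t t" by (rule KPair_subst[OF Eq_sym[OF assms(2)] assms(3)])
  have tu: "\<Delta> \<turnstile> Eq t u" by (rule KPair_inj1[OF ok pt assms(5)])
  have tv: "\<Delta> \<turnstile> Eq t v" by (rule KPair_inj2[OF ok pt assms(5)])
  show ?thesis apply (rule DisjI1) apply (rule ConjI)
    apply (rule Mem_subst_left_sym[OF Eq_sym[OF tu] assms(4)])
      by (rule Eq_trans[OF Eq_sym[OF tv] tu])
qed

text \<open>If \<open>A = {a, b, c, d}\<close> is transitive, its elements are fixed points and \<open>PlUnion A Y\<close>, then
  \<open>F = {(a, a), (b, b), (c, c), (d, d), (A, Y)}\<close> on \<open>D = A \<union> {A}\<close> witnesses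
  \<open>A^pl = Y\<close>.\<close>

context
  fixes \<Gamma> :: "fm set" and A Y a b c d pa pb pc pd pA Qf Sg F D :: nat
  assumes okG: "ikp_ctxt \<Gamma>"
  and hQ: "\<Gamma> \<turnstile> Set4 A a b c d" and htA: "\<Gamma> \<turnstile> Trans A"
  and hfa: "\<Gamma> \<turnstile> PlUnion a a" and hfb: "\<Gamma> \<turnstile> PlUnion b b" and hfc: "\<Gamma> \<turnstile> PlUnion c c"
    and hfd: "\<Gamma> \<turnstile> PlUnion d d"
  and hfY: "\<Gamma> \<turnstile> PlUnion A Y"
  and hpa: "\<Gamma> \<turnstile> KPair pa a a" and hpb: "\<Gamma> \<turnstile> KPair pb b b" and hpc: "\<Gamma> \<turnstile> KPair pc c c"
  and hpd: "\<Gamma> \<turnstile> KPair pd d d" and hpA: "\<Gamma> \<turnstile> KPair pA A Y"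
  and hQ4: "\<Gamma> \<turnstile> Set4 Qf pa pb pc pd" and hSg: "\<Gamma> \<turnstile> Sing Sg pA" and hF: "\<Gamma> \<turnstile> Union2 F Qf Sg"
  and hD: "\<Gamma> \<turnstile> Succ D A"
begin

lemma graph_cases: assumes sub: "\<Gamma> \<subseteq> \<Delta>" and ok: "ikp_ctxt \<Delta>" and pF: "\<Delta> \<turnstile> Mem p F"
    and P: "\<Delta> \<turnstile> KPair p u v"
  shows "\<Delta> \<turnstile> Disj (Conj (Mem u A) (Eq v u)) (Conj (Eq u A) (Eq v Y))"
proof (rule Union2E[OF deriv_mono[OF hF sub] pF])
  let ?H = "insert (Mem p Qf) \<Delta>"
  have okH: "ikp_ctxt ?H" using ok by simp
  have s: "\<Gamma> \<subseteq> insert (Eq p x) ?H" for x using sub by blast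
  show "?H \<turnstile> Disj (Conj (Mem u A) (Eq v u)) (Conj (Eq u A) (Eq v Y))"
    apply (rule Set4E[OF deriv_mono[OF hQ4] Hyp_insert]) using sub apply blast
    apply (rule graph_diag_case[OF _ Hyp_insert deriv_mono[OF hpa s] deriv_mono[OF Set4I1[OF hQ] s] weaken2[OF P]]) using ok apply simp
    apply (rule graph_diag_case[OF _ Hyp_insert deriv_mono[OF hpb s] deriv_mono[OF Set4I2[OF hQ] s] weaken2[OF P]]) using ok apply simp
    apply (rule graph_diag_case[OF _ Hyp_insert deriv_mono[OF hpc s] deriv_mono[OF Set4I3[OF hQ] s] weaken2[OF P]]) using ok apply simp
    apply (rule graph_diag_case[OF _ Hyp_insert deriv_mono[OF hpd s] deriv_mono[OF Set4I4[OF hQ] s] weaken2[OF P]]) using ok by simp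
next
  let ?H = "insert (Mem p Sg) \<Delta>"
  have okH: "ikp_ctxt ?H" using ok by simp
  have s: "\<Gamma> \<subseteq> ?H" using sub by blast
  have e: "?H \<turnstile> Eq p pA" by (rule SingD[OF deriv_mono[OF hSg s] Hyp_insert])
  have pt: "?H \<turnstile> KPair p A Y" by (rule KPair_subst[OF Eq_sym[OF e] deriv_mono[OF hpA s]])
  show "?H \<turnstile> Disj (Conj (Mem u A) (Eq v u)) (Conj (Eq u A) (Eq v Y))"
    apply (rule DisjI2) apply (rule ConjI)
    apply (rule Eq_sym[OF KPair_inj1[OF okH pt weaken[OF P]]])
    by (rule Eq_sym[OF KPair_inj2[OF okH pt weaken[OF P]]])
qed

lemma graph_diag_value: assumes sub: "\<Gamma> \<subseteq> \<Delta>" and ok: "ikp_ctxt \<Delta>" and gA: "\<Delta> \<turnstile> Mem g A"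
    and ip: "\<Delta> \<turnstile> InPair g v F"
  shows "\<Delta> \<turnstile> Eq v g"
proof (rule InPairE[OF ip ok])
  fix p let ?H = "insert (Mem p F) (insert (KPair p g v) \<Delta>)"
  have okH: "ikp_ctxt ?H" using ok by simp
  have "?H \<turnstile> Disj (Conj (Mem g A) (Eq v g)) (Conj (Eq g A) (Eq v Y))"
    by (rule graph_cases[OF _ okH Hyp_insert]) (use sub in blast, rule Hyp, simp)
  then show "?H \<turnstile> Eq v g"
    apply (rule DisjE) apply (rule ConjE2[OF Hyp_insert])
    apply (rule Mem_Eq_contr) using ok apply simp apply (rule deriv_mono[OF gA], blast)
      by (rule ConjE1[OF Hyp_insert])
qed

lemma graph_diag: assumes sub: "\<Gamma> \<subseteq> \<Delta>" and gA: "\<Delta> \<turnstile> Mem g A"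
  shows "\<Delta> \<turnstile> InPair g g F"
proof -
  have s: "\<Gamma> \<subseteq> insert (Eq g x) \<Delta>" for x using sub by blast
  have q4: "\<Gamma> \<subseteq> \<Delta>' \<Longrightarrow> \<Delta>' \<turnstile> Mem q Qf \<Longrightarrow> \<Delta>' \<turnstile> Mem q F" for \<Delta>' q by (rule Union2I1[OF deriv_mono[OF hF]])
  show ?thesis
    apply (rule Set4E[OF deriv_mono[OF hQ sub] gA])
    apply (rule InPair_diag_subst[OF Eq_sym[OF Hyp_insert]])
    apply (rule InPairI[OF q4[OF s Set4I1[OF deriv_mono[OF hQ4 s]]] deriv_mono[OF hpa s]])
    apply (rule InPair_diag_subst[OF Eq_sym[OF Hyp_insert]])
    apply (rule InPairI[OF q4[OF s Set4I2[OF deriv_mono[OF hQ4 s]]] deriv_mono[OF hpb s]])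
    apply (rule InPair_diag_subst[OF Eq_sym[OF Hyp_insert]])
    apply (rule InPairI[OF q4[OF s Set4I3[OF deriv_mono[OF hQ4 s]]] deriv_mono[OF hpc s]])
    apply (rule InPair_diag_subst[OF Eq_sym[OF Hyp_insert]])
      by (rule InPairI[OF q4[OF s Set4I4[OF deriv_mono[OF hQ4 s]]] deriv_mono[OF hpd s]])
qed

lemma PlUnion_diag: assumes sub: "\<Gamma> \<subseteq> \<Delta>" and gA: "\<Delta> \<turnstile> Mem g A" shows "\<Delta> \<turnstile> PlUnion g g"
proof -
  have s: "\<Gamma> \<subseteq> insert (Eq g x) \<Delta>" for x using sub by blast
  show ?thesis
    apply (rule Set4E[OF deriv_mono[OF hQ sub] gA])
    apply (rule PlUnion_diag_subst[OF Eq_sym[OF Hyp_insert] deriv_mono[OF hfa s]])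
    apply (rule PlUnion_diag_subst[OF Eq_sym[OF Hyp_insert] deriv_mono[OF hfb s]])
    apply (rule PlUnion_diag_subst[OF Eq_sym[OF Hyp_insert] deriv_mono[OF hfc s]])
    by (rule PlUnion_diag_subst[OF Eq_sym[OF Hyp_insert] deriv_mono[OF hfd s]])
qed

lemma PlStep_diag: assumes sub: "\<Gamma> \<subseteq> \<Delta>" and ok: "ikp_ctxt \<Delta>" and fx: "\<Delta> \<turnstile> PlUnion u w"
    and uA: "\<Delta> \<turnstile> Sub u A"
  shows "\<Delta> \<turnstile> PlStep F u w"
proof (rule PlStepI[OF ok])
  fix x g v let ?K = "insert (Mem g u) (insert (InPair g v F) (insert (Sub x v) (insert (Relpl v x) \<Delta>)))"
  have okK: "ikp_ctxt ?K" using ok by simp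
  have sK: "\<Gamma> \<subseteq> ?K" using sub by blast
  have gA: "?K \<turnstile> Mem g A" by (rule SubE[OF deriv_mono[OF uA] Hyp_insert]) blast
  have vg: "?K \<turnstile> Eq v g" by (rule graph_diag_value[OF sK okK gA]) (rule Hyp, simp)
  show "?K \<turnstile> Mem x w"
    apply (rule PlUnion_memI[OF deriv_mono[OF fx] Hyp_insert]) apply blast
    apply (rule Sub_subst_right[OF vg]) apply (rule Hyp, simp)
    apply (rule Relpl_subst_left[OF vg]) by (rule Hyp, simp)
next
  fix x let ?H = "insert (Mem x w) \<Delta>"
  have okH: "ikp_ctxt ?H" using ok by simp
  show "?H \<turnstile> PlStepMem F u x"
  proof (rule PlUnionE[OF weaken[OF fx] Hyp_insert okH])
    fix g let ?K = "insert (Mem g u) (insert (Sub x g) (insert (Relpl g x) ?H))"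
    have okK: "ikp_ctxt ?K" using ok by simp
    have sK: "\<Gamma> \<subseteq> ?K" using sub by blast
    have gA: "?K \<turnstile> Mem g A" by (rule SubE[OF deriv_mono[OF uA] Hyp_insert]) blast
    show "?K \<turnstile> PlStepMem F u x"
      apply (rule PlStepMemI[OF Hyp_insert graph_diag[OF sK gA]]) by (rule Hyp, simp)+
  qed
qed

lemma graph_dom_Trans: "\<Gamma> \<turnstile> Trans D"
proof (rule TransI[OF okG])
  fix y z let ?H = "insert (Mem z y) (insert (Mem y D) \<Gamma>)"
  have s: "\<Gamma> \<subseteq> insert x ?H" for x by blast
  have yD: "?H \<turnstile> Mem y D" by (rule Hyp) simp
  show "?H \<turnstile> Mem z D"
    apply (rule SuccE[OF deriv_mono[OF hD] yD]) apply blast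
    apply (rule SuccI1[OF deriv_mono[OF hD s]])
    apply (rule TransE[OF deriv_mono[OF htA s] Hyp_insert]) apply (rule Hyp, simp)
    apply (rule SuccI1[OF deriv_mono[OF hD s]]) apply (rule Mem_subst_right[OF Hyp_insert])
      by (rule Hyp, simp)
qed

lemma graph_A_in_dom: "\<Gamma> \<turnstile> Mem A D" by (rule SuccI2[OF hD EqRefl])

lemma graph_A_Y: "\<Gamma> \<turnstile> InPair A Y F" by (rule InPairI[OF Union2I2[OF hF Sing_memI[OF hSg EqRefl]] hpA])

lemma graph_PlTotal: "\<Gamma> \<turnstile> PlTotal F D"
proof (rule PlTotalI[OF okG])
  fix x let ?H = "insert (Mem x D) \<Gamma>"
  have s: "\<Gamma> \<subseteq> insert y ?H" for y by blast
  show "?H \<turnstile> Ex (InPair (Suc x) 0 (Suc F))"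
    apply (rule SuccE[OF deriv_mono[OF hD] Hyp_insert]) apply blast
    apply (rule PlTotal_witness) apply (rule graph_diag[OF s Hyp_insert])
    apply (rule PlTotal_witness)
      by (rule InPair_subst[OF Eq_sym[OF Hyp_insert] deriv_mono[OF graph_A_Y s]])
qed

lemma graph_PlGraph: "\<Gamma> \<turnstile> PlGraph F D"
proof (rule PlGraphI[OF okG])
  fix p let ?H = "insert (Mem p F) \<Gamma>"
  have s: "\<Gamma> \<subseteq> insert y ?H" for y by blast
  have s2: "\<Gamma> \<subseteq> insert y (insert z ?H)" for y z by blast
  show "?H \<turnstile> BEx D (Ex (KPair (Suc (Suc p)) (Suc 0) 0))"
    apply (rule Union2E[OF deriv_mono[OF hF] Hyp_insert]) apply blast
    apply (rule Set4E[OF deriv_mono[OF hQ4 s] Hyp_insert])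
    apply (rule PlGraph_witness[OF SuccI1[OF deriv_mono[OF hD s2] Set4I1[OF deriv_mono[OF hQ s2]]] KPair_subst[OF Eq_sym[OF Hyp_insert] deriv_mono[OF hpa s2]]])
    apply (rule PlGraph_witness[OF SuccI1[OF deriv_mono[OF hD s2] Set4I2[OF deriv_mono[OF hQ s2]]] KPair_subst[OF Eq_sym[OF Hyp_insert] deriv_mono[OF hpb s2]]])
    apply (rule PlGraph_witness[OF SuccI1[OF deriv_mono[OF hD s2] Set4I3[OF deriv_mono[OF hQ s2]]] KPair_subst[OF Eq_sym[OF Hyp_insert] deriv_mono[OF hpc s2]]])
    apply (rule PlGraph_witness[OF SuccI1[OF deriv_mono[OF hD s2] Set4I4[OF deriv_mono[OF hQ s2]]] KPair_subst[OF Eq_sym[OF Hyp_insert] deriv_mono[OF hpd s2]]])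
    apply (rule PlGraph_witness[OF SuccI2[OF deriv_mono[OF hD s] EqRefl]])
    apply (rule KPair_subst[OF Eq_sym[OF SingD[OF deriv_mono[OF hSg s] Hyp_insert]] deriv_mono[OF hpA s]])
    done
qed

lemma graph_PlSingleValued: "\<Gamma> \<turnstile> PlSingleValued F"
proof (rule PlSingleValuedI[OF okG])
  fix p q b v v'
  let ?H = "insert (KPair p b v) (insert (KPair q b v') (insert (Mem q F) (insert (Mem p F) \<Gamma>)))"
  have okH: "ikp_ctxt ?H" using okG by simp
  have s: "\<Gamma> \<subseteq> ?H" by blast
  have c1: "?H \<turnstile> Disj (Conj (Mem b A) (Eq v b)) (Conj (Eq b A) (Eq v Y))"
    by (rule graph_cases[OF s okH, where p=p]) (rule Hyp, simp)+
  have c2: "?H \<turnstile> Disj (Conj (Mem b A) (Eq v' b)) (Conj (Eq b A) (Eq v' Y))"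
    by (rule graph_cases[OF s okH, where p=q]) (rule Hyp, simp)+
  let ?c1a = "Conj (Mem b A) (Eq v b)" let ?c1b = "Conj (Eq b A) (Eq v Y)"
  show "?H \<turnstile> Eq v v'"
    apply (rule DisjE[OF c1]; rule DisjE[OF weaken[OF c2]])
    apply (rule Eq_trans[OF ConjE2[OF Hyp[of ?c1a]] Eq_sym[OF ConjE2[OF Hyp_insert]]]) apply simp
    apply (rule Mem_Eq_contr[OF _ ConjE1[OF Hyp[of ?c1a]] ConjE1[OF Hyp_insert]]) using okG
    apply simp apply simp
    apply (rule Mem_Eq_contr[OF _ ConjE1[OF Hyp_insert] ConjE1[OF Hyp[of ?c1b]]]) using okG
    apply simp apply simp
    apply (rule Eq_trans[OF ConjE2[OF Hyp[of ?c1b]] Eq_sym[OF ConjE2[OF Hyp_insert]]]) by simp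
qed

lemma graph_PlRec: "\<Gamma> \<turnstile> PlRec F"
proof (rule PlRecI[OF okG])
  fix p b w let ?H = "insert (KPair p b w) (insert (Mem p F) \<Gamma>)"
  have okH: "ikp_ctxt ?H" using okG by simp
  have s: "\<Gamma> \<subseteq> ?H" by blast
  have c: "?H \<turnstile> Disj (Conj (Mem b A) (Eq w b)) (Conj (Eq b A) (Eq w Y))"
    by (rule graph_cases[OF s okH, where p=p]) (rule Hyp, simp)+
  show "?H \<turnstile> PlStep F b w"
  proof (rule DisjE[OF c])
    let ?K = "insert (Conj (Mem b A) (Eq w b)) ?H"
    have okK: "ikp_ctxt ?K" using okG by simp
    have sK: "\<Gamma> \<subseteq> ?K" by blast
    have bA: "?K \<turnstile> Mem b A" by (rule ConjE1[OF Hyp_insert])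
    have bsA: "?K \<turnstile> Sub b A"
      by (rule SubI[OF okK]) (rule TransE[OF deriv_mono[OF htA] weaken[OF bA] Hyp_insert], blast)
    have "?K \<turnstile> PlStep F b b" by (rule PlStep_diag[OF sK okK PlUnion_diag[OF sK bA] bsA])
    then show "?K \<turnstile> PlStep F b w" by (rule PlStep_subst3[OF Eq_sym[OF ConjE2[OF Hyp_insert]]])
  next
    let ?K = "insert (Conj (Eq b A) (Eq w Y)) ?H"
    have okK: "ikp_ctxt ?K" using okG by simp
    have sK: "\<Gamma> \<subseteq> ?K" by blast
    have "?K \<turnstile> PlStep F A Y"
      by (rule PlStep_diag[OF sK okK deriv_mono[OF hfY sK] Sub_refl[OF okK]])
    then have "?K \<turnstile> PlStep F b Y" by (rule PlStep_subst2[OF Eq_sym[OF ConjE1[OF Hyp_insert]]])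
    then show "?K \<turnstile> PlStep F b w" by (rule PlStep_subst3[OF Eq_sym[OF ConjE2[OF Hyp_insert]]])
  qed
qed

lemma IsPl_from_graph: "\<Gamma> \<turnstile> IsPl A Y"
  by (rule IsPlI[OF graph_dom_Trans graph_A_in_dom graph_PlTotal graph_PlGraph graph_PlSingleValued
      graph_PlRec graph_A_Y])

end

lemma IsPl_fixed_point: assumes ok: "ikp_ctxt \<Gamma>" and Q: "\<Gamma> \<turnstile> Set4 A a b c d" and tA: "\<Gamma> \<turnstile> Trans A"
  and fa: "\<Gamma> \<turnstile> PlUnion a a" and fb: "\<Gamma> \<turnstile> PlUnion b b" and fc: "\<Gamma> \<turnstile> PlUnion c c"
    and fd: "\<Gamma> \<turnstile> PlUnion d d"
  and fY: "\<Gamma> \<turnstile> PlUnion A Y"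
  shows "\<Gamma> \<turnstile> IsPl A Y"
  apply (rule ex_KPair[OF ok, of a a])
  apply (rule ex_KPair[of _ b b], simp add: ok)
  apply (rule ex_KPair[of _ c c], simp add: ok)
  apply (rule ex_KPair[of _ d d], simp add: ok)
  apply (rule ex_KPair[of _ A Y], simp add: ok)
  subgoal for pa pb pc pd pA
    apply (rule ex_Set4[of _ pa pb pc pd], simp add: ok)
    subgoal for Qf
      apply (rule ex_Sing[of _ pA], simp add: ok)
      subgoal for Sg
        apply (rule ex_Union2[of _ Qf Sg], simp add: ok)
        subgoal for F
          apply (rule ex_Succ[of _ A], simp add: ok)
          subgoal for D
            apply (rule IsPl_from_graph[where a=a and b=b and c=c and d=d and pa=pa and pb=pb
            and pc=pc and pd=pd
                and pA=pA and Qf=Qf and Sg=Sg and F=F and D=D])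
            apply (simp add: ok)
            apply (rule deriv_mono[OF Q], blast) apply (rule deriv_mono[OF tA], blast)
            apply (rule deriv_mono[OF fa], blast) apply (rule deriv_mono[OF fb], blast)
            apply (rule deriv_mono[OF fc], blast)
            apply (rule deriv_mono[OF fd], blast) apply (rule deriv_mono[OF fY], blast)
            by (rule Hyp, simp)+
          done
        done
      done
    done
  done

section \<open>PlUb and injectivity imply restricted excluded middle\<close>

lemma Sub_empty_eq: assumes ok: "ikp_ctxt \<Gamma>" and E: "\<Gamma> \<turnstile> IsEmpty e" and S: "\<Gamma> \<turnstile> Sub x e"
  shows "\<Gamma> \<turnstile> Eq x e"
  apply (rule ExtI[OF ok]) apply (rule IsEmptyE[OF weaken[OF E]])
  apply (rule SubE[OF weaken[OF S] Hyp_insert])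
  by (rule IsEmptyE[OF weaken[OF E] Hyp_insert])

text \<open>Here \<open>e = 0\<close> and \<open>i = 1 = {e}\<close>; below, for given \<open>u\<close> and \<open>v\<close>, also
  \<open>r = {z \<in> 1 | u \<in> v}\<close>, \<open>Aa = {0, 1, r}\<close>, \<open>Ab = {0, 1}\<close>, a plump \<open>\<beta> \<ni> 1\<close> and
  \<open>Y = {x \<in> \<beta> | x \<subseteq> 1}\<close>. Every \<open>x \<subseteq> 1\<close> is relatively plump, so \<open>Y\<close> consists of
  all subsets of 1, and \<open>Aa^pl = Y = Ab^pl\<close>.\<close>

context
  fixes \<Gamma> :: "fm set" and e i :: nat
  assumes ok: "ikp_ctxt \<Gamma>" and E: "\<Gamma> \<turnstile> IsEmpty e" and O: "\<Gamma> \<turnstile> Sing i e"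
begin

lemma mem_one: "\<Gamma> \<subseteq> \<Delta> \<Longrightarrow> \<Delta> \<turnstile> Mem z i \<Longrightarrow> \<Delta> \<turnstile> Eq z e"
  by (rule SingD[OF deriv_mono[OF O]])

lemma Sub_one_Trans: assumes s: "\<Gamma> \<subseteq> \<Delta>" and okD: "ikp_ctxt \<Delta>" and y: "\<Delta> \<turnstile> Sub y i"
  shows "\<Delta> \<turnstile> Trans y"
proof (rule TransI[OF okD])
  fix w z let ?H = "insert (Mem z w) (insert (Mem w y) \<Delta>)"
  have "?H \<turnstile> Eq w e"
    by (rule mem_one) (use s in blast, rule SubE[OF deriv_mono[OF y] Hyp], blast, simp)
  then have ze: "?H \<turnstile> Mem z e" by (rule Mem_subst_right) (rule Hyp_insert)
  have EH: "?H \<turnstile> IsEmpty e" by (rule deriv_mono[OF E]) (use s in blast)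
  show "?H \<turnstile> Mem z y" by (rule IsEmptyE[OF EH ze])
qed

lemma Sub_zero_one: "\<Gamma> \<subseteq> \<Delta> \<Longrightarrow> ikp_ctxt \<Delta> \<Longrightarrow> \<Delta> \<turnstile> Sub e i"
  apply (rule SubI, assumption) apply (rule IsEmptyE[OF deriv_mono[OF E] Hyp_insert]) by blast

lemma Relpl_Sub_one: assumes s: "\<Gamma> \<subseteq> \<Delta>" and okD: "ikp_ctxt \<Delta>" and x: "\<Delta> \<turnstile> Sub x i"
  shows "\<Delta> \<turnstile> Relpl a x"
proof (rule RelplI[OF okD])
  fix d ep let ?H = "insert (Sub ep d) (insert (Mem ep a) (insert (Mem d x) \<Delta>))"
  have okH: "ikp_ctxt ?H" using okD by simp
  have de: "?H \<turnstile> Eq d e"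
    by (rule mem_one) (use s in blast, rule SubE[OF deriv_mono[OF x] Hyp], blast, simp)
  have "?H \<turnstile> Sub ep e" by (rule Sub_subst_right[OF de Hyp_insert])
  moreover have "?H \<turnstile> IsEmpty e" by (rule deriv_mono[OF E]) (use s in blast)
  ultimately have ee: "?H \<turnstile> Eq ep e" using Sub_empty_eq[OF okH] by blast
  have "?H \<turnstile> Eq d ep" by (rule Eq_trans[OF de Eq_sym[OF ee]])
  then show "?H \<turnstile> Mem ep x" by (rule Mem_subst_left) (rule Hyp, simp)
qed

lemma PlUnionMem_refl: "ikp_ctxt \<Delta> \<Longrightarrow> \<Delta> \<turnstile> Mem x s \<Longrightarrow> \<Delta> \<turnstile> PlUnionMem s x"
  apply (rule PlUnionMemI, assumption) apply (rule Sub_refl, assumption) by (rule Relpl_refl)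

lemma Sub_zero_eq: assumes s: "\<Gamma> \<subseteq> \<Delta>" and okD: "ikp_ctxt \<Delta>" and g: "\<Delta> \<turnstile> Eq g e" and x: "\<Delta> \<turnstile> Sub x g"
  shows "\<Delta> \<turnstile> Eq x e"
  by (rule Sub_empty_eq[OF okD deriv_mono[OF E s] Sub_subst_right[OF g x]])

lemma PlUnion_zero: "\<Gamma> \<turnstile> PlUnion e e"
  apply (rule PlUnionI[OF ok]) apply (rule PlUnionMem_refl) using ok apply simp
  apply (rule Hyp_insert)
  apply (rule IsEmptyE[OF deriv_mono[OF E]]) apply blast by (rule Hyp_insert)

lemma PlUnion_one: "\<Gamma> \<turnstile> PlUnion i i"
proof (rule PlUnionI[OF ok])
  fix x show "insert (Mem x i) \<Gamma> \<turnstile> PlUnionMem i x"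
    by (rule PlUnionMem_refl) (use ok in simp, rule Hyp_insert)
next
  fix x g let ?H = "insert (Mem g i) (insert (Sub x g) (insert (Relpl g x) \<Gamma>))"
  have okH: "ikp_ctxt ?H" using ok by simp
  have s: "\<Gamma> \<subseteq> ?H" by blast
  have "?H \<turnstile> Eq x e" by (rule Sub_zero_eq[OF s okH mem_one[OF s Hyp_insert]]) (rule Hyp, simp)
  then show "?H \<turnstile> Mem x i" by (rule Sing_memI[OF deriv_mono[OF O s]])
qed

lemma PlOrd_one: "\<Gamma> \<turnstile> PlOrd i"
proof (rule PlOrdI[OF ok])
  show "\<Gamma> \<turnstile> Ord i"
  proof (rule OrdI[OF ok Sub_one_Trans[OF _ ok Sub_refl[OF ok]]])
    show "\<Gamma> \<subseteq> \<Gamma>" by blast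
    fix y let ?H = "insert (Mem y i) \<Gamma>"
    have okH: "ikp_ctxt ?H" using ok by simp
    have yo: "?H \<turnstile> Sub y i"
      by (rule Sub_subst_left[OF Eq_sym[OF mem_one[OF _ Hyp_insert]] Sub_zero_one]) (use okH in blast)+
    show "?H \<turnstile> Trans y" by (rule Sub_one_Trans[OF _ okH yo]) blast
  qed
next
  fix b g let ?H = "insert (Relpl i g) (insert (Sub g b) (insert (Mem b i) \<Gamma>))"
  have okH: "ikp_ctxt ?H" using ok by simp
  have s: "\<Gamma> \<subseteq> ?H" by blast
  have "?H \<turnstile> Eq g e" by (rule Sub_zero_eq[OF s okH mem_one[OF s], where g=b]) (rule Hyp, simp)+
  then show "?H \<turnstile> Mem g i" by (rule Sing_memI[OF deriv_mono[OF O s]])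
next
  fix b g d let ?H = "insert (Mem b d) (insert (Mem d i) (insert (Relpl i g) (insert (Sub g b) (insert (Mem b i) \<Gamma>))))"
  have s: "\<Gamma> \<subseteq> ?H" by blast
  have "?H \<turnstile> Eq d e" by (rule mem_one[OF s]) (rule Hyp, simp)
  then have "?H \<turnstile> Mem b e" by (rule Mem_subst_right) (rule Hyp_insert)
  then show "?H \<turnstile> Mem g d" by (rule IsEmptyE[OF deriv_mono[OF E s]])
qed

end

context
  fixes \<Gamma> :: "fm set" and e i r u v Aa Ab \<beta> Y :: nat
  assumes ok: "ikp_ctxt \<Gamma>" and E: "\<Gamma> \<turnstile> IsEmpty e" and O: "\<Gamma> \<turnstile> Sing i e"
  and R: "\<Gamma> \<turnstile> Compr r (Conj (Mem 0 (Suc i)) (Mem (Suc u) (Suc v)))"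
  and Q1: "\<Gamma> \<turnstile> Set4 Aa e i r r" and Q2: "\<Gamma> \<turnstile> Set4 Ab e i i i"
  and PB: "\<Gamma> \<turnstile> PlOrd \<beta>" and OB: "\<Gamma> \<turnstile> Mem i \<beta>"
  and YS: "\<Gamma> \<turnstile> Compr Y (Conj (Mem 0 (Suc \<beta>)) (Sub 0 (Suc i)))"
begin

lemma r_memD: "\<Gamma> \<subseteq> \<Delta> \<Longrightarrow> \<Delta> \<turnstile> Mem z r \<Longrightarrow> \<Delta> \<turnstile> Conj (Mem z i) (Mem u v)"
  using Compr_memD[OF deriv_mono[OF R]] by (simp add: inst_def)
lemma r_memI: "\<Gamma> \<subseteq> \<Delta> \<Longrightarrow> \<Delta> \<turnstile> Conj (Mem z i) (Mem u v) \<Longrightarrow> \<Delta> \<turnstile> Mem z r"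
  using Compr_memI[OF deriv_mono[OF R], of \<Delta> z] by (simp add: inst_def)

lemma Sub_r_one: "\<Gamma> \<subseteq> \<Delta> \<Longrightarrow> ikp_ctxt \<Delta> \<Longrightarrow> \<Delta> \<turnstile> Sub r i"
  apply (rule SubI, assumption) apply (rule ConjE1) apply (rule r_memD) by (blast, rule Hyp_insert)

lemma Set4_Sub_one: assumes s: "\<Gamma> \<subseteq> \<Delta>" and okD: "ikp_ctxt \<Delta>" and Q: "\<Delta> \<turnstile> Set4 A e i c d"
  and c: "\<Delta> \<turnstile> Sub c i" and d: "\<Delta> \<turnstile> Sub d i" and y: "\<Delta> \<turnstile> Mem y A" shows "\<Delta> \<turnstile> Sub y i"
  apply (rule Set4E[OF Q y])
  apply (rule Sub_subst_left[OF Eq_sym[OF Hyp_insert]]) apply (rule Sub_zero_one[OF ok E O]) using s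
  apply blast using okD apply simp
  apply (rule Sub_subst_left[OF Eq_sym[OF Hyp_insert]]) apply (rule Sub_refl) using okD apply simp
  apply (rule Sub_subst_left[OF Eq_sym[OF Hyp_insert] weaken[OF c]])
  by (rule Sub_subst_left[OF Eq_sym[OF Hyp_insert] weaken[OF d]])

lemma Sub_one_Aa: "\<Gamma> \<subseteq> \<Delta> \<Longrightarrow> ikp_ctxt \<Delta> \<Longrightarrow> \<Delta> \<turnstile> Mem y Aa \<Longrightarrow> \<Delta> \<turnstile> Sub y i"
  by (rule Set4_Sub_one[OF _ _ deriv_mono[OF Q1] Sub_r_one Sub_r_one]) auto
lemma Sub_one_Ab: "\<Gamma> \<subseteq> \<Delta> \<Longrightarrow> ikp_ctxt \<Delta> \<Longrightarrow> \<Delta> \<turnstile> Mem y Ab \<Longrightarrow> \<Delta> \<turnstile> Sub y i"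
  by (rule Set4_Sub_one[OF _ _ deriv_mono[OF Q2] Sub_refl Sub_refl]) auto

lemma Ord_Sub_one: assumes subA: "\<And>\<Delta> y. \<Gamma> \<subseteq> \<Delta> \<Longrightarrow> ikp_ctxt \<Delta> \<Longrightarrow> \<Delta> \<turnstile> Mem y A \<Longrightarrow> \<Delta> \<turnstile> Sub y i"
  and eA: "\<Gamma> \<turnstile> Mem e A" shows "\<Gamma> \<turnstile> Ord A"
proof (rule OrdI[OF ok])
  show "\<Gamma> \<turnstile> Trans A"
  proof (rule TransI[OF ok])
    fix y z let ?H = "insert (Mem z y) (insert (Mem y A) \<Gamma>)"
    have okH: "ikp_ctxt ?H" using ok by simp
    have s: "\<Gamma> \<subseteq> ?H" by blast
    have "?H \<turnstile> Sub y i" by (rule subA[OF s okH]) (rule Hyp, simp)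
    then have "?H \<turnstile> Mem z i" by (rule SubE) (rule Hyp_insert)
    then have "?H \<turnstile> Eq z e" by (rule mem_one[OF ok E O s])
    then show "?H \<turnstile> Mem z A" by (rule Mem_subst_left_sym) (rule deriv_mono[OF eA s])
  qed
next
  fix y let ?H = "insert (Mem y A) \<Gamma>"
  have okH: "ikp_ctxt ?H" using ok by simp
  have s: "\<Gamma> \<subseteq> ?H" by blast
  have yo: "?H \<turnstile> Sub y i" by (rule subA[OF s okH Hyp_insert])
  show "?H \<turnstile> Trans y" by (rule Sub_one_Trans[OF ok E O s okH yo])
qed

lemma PlUnion_r: "\<Gamma> \<turnstile> PlUnion r r"
proof (rule PlUnionI[OF ok])
  fix x show "insert (Mem x r) \<Gamma> \<turnstile> PlUnionMem r x"
    by (rule PlUnionMem_refl[OF ok E O]) (use ok in simp, rule Hyp_insert)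
next
  fix x g let ?H = "insert (Mem g r) (insert (Sub x g) (insert (Relpl g x) \<Gamma>))"
  have okH: "ikp_ctxt ?H" using ok by simp
  have s: "\<Gamma> \<subseteq> ?H" by blast
  have c: "?H \<turnstile> Conj (Mem g i) (Mem u v)" by (rule r_memD[OF s Hyp_insert])
  have ge: "?H \<turnstile> Eq g e" by (rule mem_one[OF ok E O s ConjE1[OF c]])
  have xe: "?H \<turnstile> Eq x e" by (rule Sub_zero_eq[OF ok E O s okH ge]) (rule Hyp, simp)
  have "?H \<turnstile> Mem x i" by (rule Sing_memI[OF deriv_mono[OF O s] xe])
  then show "?H \<turnstile> Mem x r" by (rule r_memI[OF s ConjI[OF _ ConjE2[OF c]]])
qed

lemma PlUnion_Y: assumes subA: "\<And>\<Delta> y. \<Gamma> \<subseteq> \<Delta> \<Longrightarrow> ikp_ctxt \<Delta> \<Longrightarrow> \<Delta> \<turnstile> Mem y A \<Longrightarrow> \<Delta> \<turnstile> Sub y i"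
  and oA: "\<Gamma> \<turnstile> Mem i A" shows "\<Gamma> \<turnstile> PlUnion A Y"
proof (rule PlUnionI[OF ok])
  fix x let ?H = "insert (Mem x Y) \<Gamma>"
  have okH: "ikp_ctxt ?H" using ok by simp
  have s: "\<Gamma> \<subseteq> ?H" by blast
  have "?H \<turnstile> inst (Conj (Mem 0 (Suc \<beta>)) (Sub 0 (Suc i))) x"
    by (rule Compr_memD[OF deriv_mono[OF YS s] Hyp_insert])
  then have c: "?H \<turnstile> Conj (Mem x \<beta>) (Sub x i)" by (simp add: inst_def)
  show "?H \<turnstile> PlUnionMem A x"
    by (rule PlUnionMemI[OF deriv_mono[OF oA s] ConjE2[OF c] Relpl_Sub_one[OF ok E O s okH ConjE2[OF c]]])
next
  fix x g let ?H = "insert (Mem g A) (insert (Sub x g) (insert (Relpl g x) \<Gamma>))"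
  have okH: "ikp_ctxt ?H" using ok by simp
  have s: "\<Gamma> \<subseteq> ?H" by blast
  have go: "?H \<turnstile> Sub g i" by (rule subA[OF s okH Hyp_insert])
  have xo: "?H \<turnstile> Sub x i" by (rule Sub_trans[OF okH _ go]) (rule Hyp, simp)
  have xb: "?H \<turnstile> Mem x \<beta>"
    by (rule PlOrd_plump[OF deriv_mono[OF PB s] deriv_mono[OF OB s] xo Relpl_Sub_one[OF ok E O s okH xo]])
  have "?H \<turnstile> inst (Conj (Mem 0 (Suc \<beta>)) (Sub 0 (Suc i))) x" by (simp add: inst_def ConjI[OF xb xo])
  then show "?H \<turnstile> Mem x Y" by (rule Compr_memI[OF deriv_mono[OF YS s]])
qed

lemma Ord_Aa: "\<Gamma> \<turnstile> Ord Aa" by (rule Ord_Sub_one[OF Sub_one_Aa Set4I1[OF Q1]]) auto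
lemma Ord_Ab: "\<Gamma> \<turnstile> Ord Ab" by (rule Ord_Sub_one[OF Sub_one_Ab Set4I1[OF Q2]]) auto

lemma IsPl_Aa: "\<Gamma> \<turnstile> IsPl Aa Y"
  by (rule IsPl_fixed_point[OF ok Q1 Ord_Trans[OF Ord_Aa] PlUnion_zero[OF ok E O]
        PlUnion_one[OF ok E O] PlUnion_r PlUnion_r PlUnion_Y[OF Sub_one_Aa Set4I2[OF Q1]]]) auto
lemma IsPl_Ab: "\<Gamma> \<turnstile> IsPl Ab Y"
  by (rule IsPl_fixed_point[OF ok Q2 Ord_Trans[OF Ord_Ab] PlUnion_zero[OF ok E O]
        PlUnion_one[OF ok E O] PlUnion_one[OF ok E O] PlUnion_one[OF ok E O]
        PlUnion_Y[OF Sub_one_Ab Set4I2[OF Q2]]]) auto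

lemma decide_from_Eq: assumes eq: "\<Gamma> \<turnstile> Eq Aa Ab" shows "\<Gamma> \<turnstile> Disj (Mem u v) (Neg (Mem u v))"
proof -
  have rAb: "\<Gamma> \<turnstile> Mem r Ab" by (rule Mem_subst_right[OF eq Set4I3[OF Q1]])
  have eo: "\<Gamma> \<turnstile> Mem e i" by (rule Sing_memI[OF O EqRefl])
  have r_one_case: "insert (Eq r i) \<Gamma> \<turnstile> Disj (Mem u v) (Neg (Mem u v))"
  proof -
    let ?H = "insert (Eq r i) \<Gamma>"
    have s: "\<Gamma> \<subseteq> ?H" by blast
    have "?H \<turnstile> Mem e r" by (rule Mem_subst_right[OF Eq_sym[OF Hyp_insert] weaken[OF eo]])
    then have "?H \<turnstile> Conj (Mem e i) (Mem u v)" by (rule r_memD[OF s])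
    then show ?thesis by (rule DisjI1[OF ConjE2])
  qed
  show ?thesis
  proof (rule Set4E[OF Q2 rAb])
    let ?H = "insert (Mem u v) (insert (Eq r e) \<Gamma>)"
    have s: "\<Gamma> \<subseteq> ?H" by blast
    have "?H \<turnstile> Mem e r" by (rule r_memI[OF s ConjI[OF deriv_mono[OF eo s] Hyp_insert]])
    then have "?H \<turnstile> Mem e e" by (rule Mem_subst_right[OF Hyp[of "Eq r e"], rotated]) simp
    then have "?H \<turnstile> Fls" by (rule IsEmptyE[OF deriv_mono[OF E s]])
    then show "insert (Eq r e) \<Gamma> \<turnstile> Disj (Mem u v) (Neg (Mem u v))" by (rule DisjI2[OF NegI])
  qed (rule r_one_case)+
qed

lemma Inj_decides: "\<Gamma> \<turnstile> dB (nInj 0) \<Longrightarrow> \<Gamma> \<turnstile> Disj (Mem u v) (Neg (Mem u v))"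
  by (rule decide_from_Eq[OF InjD[OF _ Ord_Aa Ord_Ab IsPl_Aa IsPl_Ab]])

end

lemma PlUb_Inj_decides: assumes ok: "ikp_ctxt \<Gamma>" and Pu: "\<Gamma> \<turnstile> dB (nPlUb 0)"
    and In: "\<Gamma> \<turnstile> dB (nInj 0)"
  shows "\<Gamma> \<turnstile> Disj (Mem u v) (Neg (Mem u v))"
  apply (rule ex_IsEmpty[OF ok]) subgoal for e
  apply (rule ex_Sing[of _ e], simp add: ok) subgoal for i
  apply (rule SepE[where a=i and \<psi>="Mem (Suc u) (Suc v)"], simp add: ok, intro delta0.intros)
  subgoal for r
  apply (rule ex_Set4[of _ e i r r], simp add: ok) subgoal for Aa
  apply (rule ex_Set4[of _ e i i i], simp add: ok) subgoal for Ab
  apply (rule PlUbE[where w=i]) apply (simp add: ok) apply (rule deriv_mono[OF Pu], blast)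
  apply (rule PlOrd_one[where e=e]) apply (simp add: ok) apply (rule Hyp, simp)
  apply (rule Hyp, simp)
  subgoal for \<beta>
  apply (rule SepE[where a=\<beta> and \<psi>="Sub 0 (Suc i)"], simp add: ok)
  apply (simp only: Sub_unfold, intro delta0.intros)
  subgoal for Y
  apply (rule Inj_decides[where e=e and i=i and r=r and Aa=Aa and Ab=Ab and \<beta>=\<beta> and Y=Y])
  apply (simp add: ok)
  apply ((rule Hyp, simp)+)[8]
  by (rule deriv_mono[OF In], blast)
  done done done done done done done

theorem proposition3p3:
  shows "IKP \<turnstile> Iff (dB (NConj (nPlUb 0) (nInj 0))) (dB nREM)"
proof (unfold dB_NConj REM_def[symmetric], rule IffI)
  let ?\<Gamma> = "insert (Conj (dB (nPlUb 0)) (dB (nInj 0))) IKP"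
  have ok: "ikp_ctxt ?\<Gamma>" by (simp add: ikp_ctxt_IKP)
  have "?\<Gamma> \<turnstile> dB (nPlUb 0)" and "?\<Gamma> \<turnstile> dB (nInj 0)"
    by (rule ConjE1[OF Hyp_insert], rule ConjE2[OF Hyp_insert])
  then show "?\<Gamma> \<turnstile> REM" by (intro REM_I[OF ok] PlUb_Inj_decides[OF ok])
next
  have "ikp_ctxt (insert REM IKP)" and "insert REM IKP \<turnstile> REM"
    by (simp_all add: ikp_ctxt_IKP Hyp_insert)
  then show "insert REM IKP \<turnstile> Conj (dB (nPlUb 0)) (dB (nInj 0))"
    by (intro ConjI REM_PlUb REM_Inj)
qed

end
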